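(* Under the setting of the context, the process $M_n=\sum_{k=1}^nY_k$ is a square integrable martingale with respect to $(\mathcal F_n)$, whose bracket is $\langle M\rangle_n=\sum_{k=1}^n a^{(m)}(\xi_{k-1},S_{k-1}/m)$, where $$a^{(m)}(i,y)=\bigl[\alpha-(v+b^{(m)})(v+b^{(m)})^t\bigr](i,y)+\sum_{u\in\mathcal V}p(i,y,u)\bigl[P(vv^t)+u(Pv)^t+(Pv)u^t\bigr](i,y+u/m).$$ Moreover there exists a finite constant $C$, depending only on $E$, $P$ and $p$, such that $|a^{(m)}(i,y)|\le C$ for all $m\ge1$, $i\in E$, $y\in\mathbb R^d$.
   Context: Let $d\ge1$, $(e_1,\dots,e_d)$ the canonical basis, $\mathcal V=\{\pm e_1,\dots,\pm e_d\}$. Let $E$ be a finite set and $P$ an irreducible and aperiodic stochastic matrix on $E$ with unique invariant probability $\mu$. For $k\in E$, $y\in\mathbb R^d$, $p(k,y,\cdot)$ is a probability on $\mathcal V$, with $y\mapsto p(k,y,u)$ twice continuously differentiable with bounded derivatives. Let $g(k,y)=\sum_u u\,p(k,y,u)$, assumed to satisfy $\sum_k\mu(k)g(k,y)=0$ for all $y$; $\alpha(i,y)=\sum_u uu^tp(i,y,u)$; $v(i,y)=\sum_{n\ge0}\sum_{j}P^n(i,j)g(j,y)$. For a function $f$ on $E\times\mathbb R^d$ (vector or matrix valued), $(Pf)(i,y)=\sum_jP(i,j)f(j,y)$. Let $b^{(m)}(i,y)=\sum_u p(i,y,u)[(v-g)(i,y+u/m)-(v-g)(i,y)]$. For an integer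 $m\ge1$: $S_0=0$, $S_{n+1}=S_n+J_{n+1}$, $J_n\in\mathcal V$, and with $\mathcal F_n=\sigma(\xi_0,\dots,\xi_n,J_0,\dots,J_n)$, $\mathbb P(\xi_{n+1}=k,J_{n+1}=u\mid\mathcal F_n)=P(\xi_n,k)p(\xi_n,S_n/m,u)$. For $n\ge1$, $Y_n=J_n+v(\xi_n,S_n/m)-\mathbb E[J_n+v(\xi_n,S_n/m)\mid\mathcal F_{n-1}]$. *)

theory Defs
  imports "HOL-Probability.Probability"
begin

fun mpow :: "('e::finite \<Rightarrow> 'e \<Rightarrow> real) \<Rightarrow> nat \<Rightarrow> 'e \<Rightarrow> 'e \<Rightarrow> real" where
  "mpow P 0 = (\<lambda>i j. if i = j then 1 else 0)"
| "mpow P (Suc n) = (\<lambda>i j. \<Sum>k\<in>UNIV. mpow P n i k * P k j)"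

definition stochastic_matrix :: "('e::finite \<Rightarrow> 'e \<Rightarrow> real) \<Rightarrow> bool" where
  "stochastic_matrix P \<longleftrightarrow> (\<forall>i j. 0 \<le> P i j) \<and> (\<forall>i. (\<Sum>j\<in>UNIV. P i j) = 1)"

definition irreducible_matrix :: "('e::finite \<Rightarrow> 'e \<Rightarrow> real) \<Rightarrow> bool" where
  "irreducible_matrix P \<longleftrightarrow> (\<forall>i j. \<exists>n. mpow P n i j > 0)"

definition aperiodic_matrix :: "('e::finite \<Rightarrow> 'e \<Rightarrow> real) \<Rightarrow> bool" where
  "aperiodic_matrix P \<longleftrightarrow> (\<forall>i. Gcd {n::nat. 1 \<le> n \<and> mpow P n i i > 0} = 1)"

definition invariant_probability :: "('e::finite \<Rightarrow> 'e \<Rightarrow> real) \<Rightarrow> ('e \<Rightarrow> real) \<Rightarrow> bool" where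
  "invariant_probability P \<mu> \<longleftrightarrow> (\<forall>i. 0 \<le> \<mu> i) \<and> (\<Sum>i\<in>UNIV. \<mu> i) = 1
      \<and> (\<forall>j. (\<Sum>i\<in>UNIV. \<mu> i * P i j) = \<mu> j)"

definition Pop :: "('e::finite \<Rightarrow> 'e \<Rightarrow> real) \<Rightarrow> ('e \<Rightarrow> 'y \<Rightarrow> 'b::real_vector) \<Rightarrow> 'e \<Rightarrow> 'y \<Rightarrow> 'b" where
  "Pop P f i y = (\<Sum>j\<in>UNIV. P i j *\<^sub>R f j y)"

definition Vdirs :: "(real^'d::finite) set" where
  "Vdirs = {axis k 1 | k. True} \<union> {axis k (-1) | k. True}"

definition outer :: "real^'d::finite \<Rightarrow> real^'d \<Rightarrow> real^'d^'d" where
  "outer u w = (\<chi> i j. u $ i * w $ j)"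

definition gfun :: "('e \<Rightarrow> real^'d::finite \<Rightarrow> real^'d \<Rightarrow> real) \<Rightarrow> 'e \<Rightarrow> real^'d \<Rightarrow> real^'d" where
  "gfun p k y = (\<Sum>u\<in>Vdirs. p k y u *\<^sub>R u)"

definition alphafun :: "('e \<Rightarrow> real^'d::finite \<Rightarrow> real^'d \<Rightarrow> real) \<Rightarrow> 'e \<Rightarrow> real^'d \<Rightarrow> real^'d^'d" where
  "alphafun p i y = (\<Sum>u\<in>Vdirs. p i y u *\<^sub>R outer u u)"

definition vfun :: "('e::finite \<Rightarrow> 'e \<Rightarrow> real) \<Rightarrow> ('e \<Rightarrow> real^'d::finite \<Rightarrow> real^'d \<Rightarrow> real)
    \<Rightarrow> 'e \<Rightarrow> real^'d \<Rightarrow> real^'d" where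
  "vfun P p i y = (\<Sum>n. \<Sum>j\<in>UNIV. mpow P n i j *\<^sub>R gfun p j y)"

definition bfun :: "('e::finite \<Rightarrow> 'e \<Rightarrow> real) \<Rightarrow> ('e \<Rightarrow> real^'d::finite \<Rightarrow> real^'d \<Rightarrow> real)
    \<Rightarrow> nat \<Rightarrow> 'e \<Rightarrow> real^'d \<Rightarrow> real^'d" where
  "bfun P p m i y = (\<Sum>u\<in>Vdirs. p i y u *\<^sub>R
      ((vfun P p i (y + inverse (real m) *\<^sub>R u) - gfun p i (y + inverse (real m) *\<^sub>R u))
       - (vfun P p i y - gfun p i y)))"

definition afun :: "('e::finite \<Rightarrow> 'e \<Rightarrow> real) \<Rightarrow> ('e \<Rightarrow> real^'d::finite \<Rightarrow> real^'d \<Rightarrow> real)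
    \<Rightarrow> nat \<Rightarrow> 'e \<Rightarrow> real^'d \<Rightarrow> real^'d^'d" where
  "afun P p m i y =
     alphafun p i y - outer (vfun P p i y + bfun P p m i y) (vfun P p i y + bfun P p m i y)
     + (\<Sum>u\<in>Vdirs. p i y u *\<^sub>R
          (Pop P (\<lambda>j z. outer (vfun P p j z) (vfun P p j z)) i (y + inverse (real m) *\<^sub>R u)
           + outer u (Pop P (vfun P p) i (y + inverse (real m) *\<^sub>R u))
           + outer (Pop P (vfun P p) i (y + inverse (real m) *\<^sub>R u)) u))"

definition Sproc :: "(nat \<Rightarrow> 'a \<Rightarrow> real^'d::finite) \<Rightarrow> nat \<Rightarrow> 'a \<Rightarrow> real^'d" where
  "Sproc J n \<omega> = (\<Sum>k\<in>{1..n}. J k \<omega>)"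

definition filt :: "'a measure \<Rightarrow> (nat \<Rightarrow> 'a \<Rightarrow> 'e) \<Rightarrow> (nat \<Rightarrow> 'a \<Rightarrow> real^'d::finite) \<Rightarrow> nat \<Rightarrow> 'a measure" where
  "filt M \<xi> J n = sigma (space M)
     (\<Union>i\<in>{..n}. {\<xi> i -` B \<inter> space M | B. True} \<union> {J i -` B \<inter> space M | B. B \<in> sets borel})"

text \<open>The Markov random walk with parameter m: P(xi_{n+1}=k, J_{n+1}=u | F_n)
  = P(xi_n,k) p(xi_n, S_n/m, u), written via the defining property of
  conditional probability (integrals over events of F_n).\<close>
definition mrw :: "('e::finite \<Rightarrow> 'e \<Rightarrow> real) \<Rightarrow> ('e \<Rightarrow> real^'d::finite \<Rightarrow> real^'d \<Rightarrow> real) \<Rightarrow> nat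
    \<Rightarrow> 'a measure \<Rightarrow> (nat \<Rightarrow> 'a \<Rightarrow> 'e) \<Rightarrow> (nat \<Rightarrow> 'a \<Rightarrow> real^'d) \<Rightarrow> bool" where
  "mrw P p m M \<xi> J \<longleftrightarrow> prob_space M
     \<and> (\<forall>n. \<xi> n \<in> measurable M (count_space UNIV))
     \<and> (\<forall>n. J n \<in> borel_measurable M)
     \<and> (\<forall>n. \<forall>\<omega>\<in>space M. J n \<omega> \<in> Vdirs)
     \<and> (\<forall>n k u A. u \<in> Vdirs \<longrightarrow> A \<in> sets (filt M \<xi> J n) \<longrightarrow>
          measure M (A \<inter> {\<omega>\<in>space M. \<xi> (Suc n) \<omega> = k \<and> J (Suc n) \<omega> = u})
          = (\<integral>\<omega>. indicator A \<omega> *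
               (P (\<xi> n \<omega>) k * p (\<xi> n \<omega>) (inverse (real m) *\<^sub>R Sproc J n \<omega>) u) \<partial>M))"

definition Yproc :: "('e::finite \<Rightarrow> 'e \<Rightarrow> real) \<Rightarrow> ('e \<Rightarrow> real^'d::finite \<Rightarrow> real^'d \<Rightarrow> real) \<Rightarrow> nat
    \<Rightarrow> 'a measure \<Rightarrow> (nat \<Rightarrow> 'a \<Rightarrow> 'e) \<Rightarrow> (nat \<Rightarrow> 'a \<Rightarrow> real^'d) \<Rightarrow> nat \<Rightarrow> 'a \<Rightarrow> real^'d" where
  "Yproc P p m M \<xi> J n \<omega> =
     (let Z = (\<lambda>\<omega>. J n \<omega> + vfun P p (\<xi> n \<omega>) (inverse (real m) *\<^sub>R Sproc J n \<omega>))
      in (\<chi> i. Z \<omega> $ i - real_cond_exp M (filt M \<xi> J (n - 1)) (\<lambda>\<omega>. Z \<omega> $ i) \<omega>))"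

definition Mproc :: "('e::finite \<Rightarrow> 'e \<Rightarrow> real) \<Rightarrow> ('e \<Rightarrow> real^'d::finite \<Rightarrow> real^'d \<Rightarrow> real) \<Rightarrow> nat
    \<Rightarrow> 'a measure \<Rightarrow> (nat \<Rightarrow> 'a \<Rightarrow> 'e) \<Rightarrow> (nat \<Rightarrow> 'a \<Rightarrow> real^'d) \<Rightarrow> nat \<Rightarrow> 'a \<Rightarrow> real^'d" where
  "Mproc P p m M \<xi> J n \<omega> = (\<Sum>k\<in>{1..n}. Yproc P p m M \<xi> J k \<omega>)"

definition real_martingale :: "'a measure \<Rightarrow> (nat \<Rightarrow> 'a measure) \<Rightarrow> (nat \<Rightarrow> 'a \<Rightarrow> real) \<Rightarrow> bool" where
  "real_martingale M F X \<longleftrightarrow>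
     (\<forall>n. X n \<in> borel_measurable (F n)) \<and> (\<forall>n. integrable M (X n))
     \<and> (\<forall>n. AE \<omega> in M. real_cond_exp M (F n) (X (Suc n)) \<omega> = X n \<omega>)"

definition vec_martingale :: "'a measure \<Rightarrow> (nat \<Rightarrow> 'a measure) \<Rightarrow> (nat \<Rightarrow> 'a \<Rightarrow> real^'d::finite) \<Rightarrow> bool" where
  "vec_martingale M F X \<longleftrightarrow> (\<forall>i. real_martingale M F (\<lambda>n \<omega>. X n \<omega> $ i))"

definition sq_integrable_martingale :: "'a measure \<Rightarrow> (nat \<Rightarrow> 'a measure) \<Rightarrow> (nat \<Rightarrow> 'a \<Rightarrow> real^'d::finite) \<Rightarrow> bool" where
  "sq_integrable_martingale M F X \<longleftrightarrow> vec_martingale M F X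
     \<and> (\<forall>n. integrable M (\<lambda>\<omega>. (norm (X n \<omega>))\<^sup>2))"

text \<open>A is the bracket (predictable quadratic variation) of the martingale X:
  A_0 = 0, A is predictable (A_{n+1} is F_n-measurable), and X X^t - A is a
  (matrix valued) martingale.\<close>
definition is_bracket :: "'a measure \<Rightarrow> (nat \<Rightarrow> 'a measure) \<Rightarrow> (nat \<Rightarrow> 'a \<Rightarrow> real^'d::finite)
    \<Rightarrow> (nat \<Rightarrow> 'a \<Rightarrow> real^'d^'d) \<Rightarrow> bool" where
  "is_bracket M F X A \<longleftrightarrow>
     (\<forall>\<omega>\<in>space M. A 0 \<omega> = 0)
     \<and> (\<forall>n i j. (\<lambda>\<omega>. A (Suc n) \<omega> $ i $ j) \<in> borel_measurable (F n))
     \<and> (\<forall>i j. real_martingale M F (\<lambda>n \<omega>. (outer (X n \<omega>) (X n \<omega>) - A n \<omega>) $ i $ j))"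

end

theory Submission
  imports Defs
begin

text \<open>Irreducibility and aperiodicity make some power \<open>P\<^sup>N\<close> strictly positive, so by
  Doeblin's argument \<open>P\<^sup>n\<close> contracts oscillations geometrically. Since \<open>g\<close> is
  \<open>\<mu>\<close>-centred, \<open>P\<^sup>n g\<close> then decays geometrically, \<open>v = \<Sum>\<^sub>n P\<^sup>n g\<close> is bounded and
  solves the Poisson equation \<open>v = g + P v\<close>.

  Given \<open>F\<^sub>n\<close>, the pair \<open>(\<xi>\<^sub>n\<^sub>+\<^sub>1, J\<^sub>n\<^sub>+\<^sub>1)\<close> has law \<open>P(\<xi>\<^sub>n, k) p(\<xi>\<^sub>n, S\<^sub>n/m, u)\<close>, and
  \<open>(\<xi>\<^sub>n, S\<^sub>n)\<close> takes finitely many values, so conditional moments of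
  \<open>Z\<^sub>n\<^sub>+\<^sub>1 = J\<^sub>n\<^sub>+\<^sub>1 + v(\<xi>\<^sub>n\<^sub>+\<^sub>1, S\<^sub>n\<^sub>+\<^sub>1/m)\<close> are finite sums. By the Poisson equation the
  conditional mean is \<open>(v + b\<^sup>(\<^sup>m\<^sup>))(\<xi>\<^sub>n, S\<^sub>n/m)\<close>, and expanding the square gives
  conditional covariance \<open>a\<^sup>(\<^sup>m\<^sup>)(\<xi>\<^sub>n, S\<^sub>n/m)\<close>. Hence \<open>Y\<^sub>n\<^sub>+\<^sub>1 = Z\<^sub>n\<^sub>+\<^sub>1 - (v + b\<^sup>(\<^sup>m\<^sup>))(\<xi>\<^sub>n, S\<^sub>n/m)\<close>
  almost surely, \<open>M\<close> is a martingale with bracket \<open>\<Sum> a\<^sup>(\<^sup>m\<^sup>)(\<xi>\<^sub>k\<^sub>-\<^sub>1, S\<^sub>k\<^sub>-\<^sub>1/m)\<close>, and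
  all terms are bounded because \<open>v\<close> is.\<close>

section \<open>Additively closed sets of natural numbers\<close>

lemma int_diff_closed_generator:
  fixes D :: "int set"
  assumes diff: "\<And>x y. x \<in> D \<Longrightarrow> y \<in> D \<Longrightarrow> x - y \<in> D"
    and x0: "x0 \<in> D" "x0 \<noteq> 0"
  shows "\<exists>d\<in>D. 0 < d \<and> (\<forall>x\<in>D. d dvd x)"
proof -
  have zero: "0 \<in> D" using diff[OF x0(1) x0(1)] by simp
  have neg: "- x \<in> D" if "x \<in> D" for x using diff[OF zero that] by simp
  have "int (nat \<bar>x0\<bar>) \<in> D \<and> 0 < nat \<bar>x0\<bar>" using x0 neg[of x0] by (cases "0 \<le> x0") auto
  then have ex: "\<exists>k. 0 < k \<and> int k \<in> D" by blast
  define d where "d = (LEAST k::nat. 0 < k \<and> int k \<in> D)"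
  have d: "0 < d" "int d \<in> D" using LeastI_ex[OF ex] unfolding d_def by auto
  have least: "d \<le> k" if "0 < k" "int k \<in> D" for k
    unfolding d_def by (rule Least_le) (use that in simp)
  have mult: "q * int d \<in> D" for q
  proof (induction q rule: int_induct[where k = 0])
    case base show ?case using zero by simp
  next
    case (step1 i) then show ?case using diff[OF step1(2) neg[OF d(2)]] by (simp add: algebra_simps)
  next
    case (step2 i) then show ?case using diff[OF step2(2) d(2)] by (simp add: algebra_simps)
  qed
  have "int d dvd x" if x: "x \<in> D" for x
  proof -
    have "x mod int d = x - (x div int d) * int d" by (simp add: minus_div_mult_eq_mod)
    then have r: "x mod int d \<in> D" using diff[OF x mult] by simp
    have "0 \<le> x mod int d" "x mod int d < int d" using d by auto
    then have "x mod int d = 0" using least[of "nat (x mod int d)"] r by fastforce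
    then show ?thesis by auto
  qed
  then show ?thesis using d by (auto intro!: bexI[of _ "int d"])
qed

lemma add_closed_mult_mem:
  fixes S :: "nat set"
  assumes add: "\<And>a b. a \<in> S \<Longrightarrow> b \<in> S \<Longrightarrow> a + b \<in> S"
    and "x \<in> S" "0 < k"
  shows "k * x \<in> S"
  using \<open>0 < k\<close>
proof (induction k)
  case (Suc k) then show ?case using add[OF \<open>x \<in> S\<close>] \<open>x \<in> S\<close> by (cases k) auto
qed simp

lemma add_closed_consecutive_large_mem:
  fixes S :: "nat set"
  assumes add: "\<And>a b. a \<in> S \<Longrightarrow> b \<in> S \<Longrightarrow> a + b \<in> S"
    and b: "b \<in> S" "b + 1 \<in> S" and n: "b * b \<le> n"
  shows "n \<in> S"
proof (cases "b = 0")
  case True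
  then show ?thesis using add_closed_mult_mem[OF add b(2), of n] b(1) by (cases n) auto
next
  case False
  define q r where "q = n div b" and "r = n mod b"
  have "r < b" "b \<le> q" using False n unfolding q_def r_def
    by (auto simp: div_le_mono[of "b * b" n b, simplified])
  then have n_eq: "n = (q - r) * b + r * (b + 1)"
    unfolding q_def r_def by (simp add: algebra_simps diff_mult_distrib)
  have "(q - r) * b \<in> S" using add_closed_mult_mem[OF add b(1)] \<open>r < b\<close> \<open>b \<le> q\<close> by simp
  then show ?thesis
    using add_closed_mult_mem[OF add b(2), of r] add n_eq by (cases "r = 0") auto
qed

lemma add_closed_Gcd_1_large_mem:
  fixes S :: "nat set"
  assumes add: "\<And>a b. a \<in> S \<Longrightarrow> b \<in> S \<Longrightarrow> a + b \<in> S"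
    and gcd: "Gcd S = 1"
  shows "\<exists>N. \<forall>n\<ge>N. n \<in> S"
proof -
  define D where "D = {int a - int b | a b. a \<in> S \<and> b \<in> S}"
  have diff: "x - y \<in> D" if xy: "x \<in> D" "y \<in> D" for x y
  proof -
    obtain a b c e where "a \<in> S" "b \<in> S" "c \<in> S" "e \<in> S" "x = int a - int b" "y = int c - int e"
      using xy unfolding D_def by blast
    then show ?thesis unfolding D_def by (intro CollectI exI[of _ "a + e"] exI[of _ "b + c"]) (auto intro: add)
  qed
  have S_D: "int s \<in> D" if "s \<in> S" for s
    unfolding D_def using add[OF that that] that by (intro CollectI exI[of _ "s + s"] exI[of _ s]) auto
  obtain s0 where "s0 \<in> S" "s0 \<noteq> 0" using gcd by (metis Gcd_0_iff insertCI subsetI zero_neq_one)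
  then obtain d where d: "d \<in> D" "0 < d" "\<And>x. x \<in> D \<Longrightarrow> d dvd x"
    using int_diff_closed_generator[OF diff S_D] by force
  have "nat d dvd s" if "s \<in> S" for s using d(3)[OF S_D[OF that]] d(2) by (metis int_dvd_int_iff nat_0_le order_less_imp_le)
  then have "nat d dvd 1" using gcd Gcd_greatest by metis
  then have "d = 1" using d(2) by simp
  then have "1 \<in> D" using d(1) by simp
  then obtain a b where "a \<in> S" "b \<in> S" "int a - int b = 1" unfolding D_def by auto
  moreover from this have "a = b + 1" by linarith
  ultimately show ?thesis using add_closed_consecutive_large_mem[OF add] by blast
qed

section \<open>Powers of stochastic matrices\<close>

lemma mpow_add: "mpow P (a + b) i j = (\<Sum>k\<in>UNIV. mpow P a i k * mpow P b k j)"
proof (induction b arbitrary: j)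
  case 0
  show ?case by (simp add: if_distrib cong: if_cong)
next
  case (Suc b)
  have "mpow P (a + Suc b) i j = (\<Sum>l\<in>UNIV. \<Sum>k\<in>UNIV. mpow P a i k * mpow P b k l * P l j)"
    by (simp add: Suc sum_distrib_right)
  also have "\<dots> = (\<Sum>k\<in>UNIV. mpow P a i k * (\<Sum>l\<in>UNIV. mpow P b k l * P l j))"
    by (subst sum.swap) (simp add: sum_distrib_left mult.assoc)
  finally show ?case by simp
qed

lemma mpow_Suc_left: "mpow P (Suc n) i j = (\<Sum>k\<in>UNIV. P i k * mpow P n k j)"
proof -
  have "mpow P 1 i k = P i k" for k by (simp add: if_distrib[of "\<lambda>x. x * _"] cong: if_cong)
  then show ?thesis using mpow_add[of P 1 n i j] by simp
qed

lemma convex_sum_bounds: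
  fixes w f :: "'i \<Rightarrow> real"
  assumes w: "\<And>j. j \<in> A \<Longrightarrow> 0 \<le> w j" "sum w A = 1"
    and f: "\<And>j. j \<in> A \<Longrightarrow> lo \<le> f j" "\<And>j. j \<in> A \<Longrightarrow> f j \<le> hi"
  shows "lo \<le> (\<Sum>j\<in>A. w j * f j)" and "(\<Sum>j\<in>A. w j * f j) \<le> hi"
proof -
  have "(\<Sum>j\<in>A. w j * lo) \<le> (\<Sum>j\<in>A. w j * f j)"
    by (rule sum_mono) (simp add: w f mult_left_mono)
  then show "lo \<le> (\<Sum>j\<in>A. w j * f j)" by (simp add: sum_distrib_right[symmetric] w)
  have "(\<Sum>j\<in>A. w j * f j) \<le> (\<Sum>j\<in>A. w j * hi)"
    by (rule sum_mono) (simp add: w f mult_left_mono)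
  then show "(\<Sum>j\<in>A. w j * f j) \<le> hi" by (simp add: sum_distrib_right[symmetric] w)
qed

lemma norm_convex_sum_le:
  fixes X :: "'i \<Rightarrow> 'b::real_normed_vector"
  assumes w: "\<And>j. j \<in> A \<Longrightarrow> 0 \<le> w j" "sum w A = 1"
    and X: "\<And>j. j \<in> A \<Longrightarrow> norm (X j) \<le> B"
  shows "norm (\<Sum>j\<in>A. w j *\<^sub>R X j) \<le> B"
proof -
  have "norm (\<Sum>j\<in>A. w j *\<^sub>R X j) \<le> (\<Sum>j\<in>A. w j * norm (X j))"
    by (rule order_trans[OF norm_sum]) (simp add: w)
  also have "\<dots> \<le> B"
    using convex_sum_bounds(2)[OF w, where f = "\<lambda>j. norm (X j)" and lo = 0 and hi = B] X by simp
  finally show ?thesis .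
qed

text \<open>Doeblin's argument, with the oscillation of \<open>f\<close> measured by an enclosing interval.\<close>
lemma doeblin_contraction:
  fixes a :: "'e::finite \<Rightarrow> 'e \<Rightarrow> real" and f :: "'e \<Rightarrow> real"
  assumes a: "\<And>i j. \<epsilon> \<le> a i j" "\<And>i. (\<Sum>j\<in>UNIV. a i j) = 1" and "0 \<le> \<epsilon>"
    and f: "\<And>j. lo \<le> f j" "\<And>j. f j \<le> hi"
  shows "\<exists>lo' hi'. hi' - lo' \<le> (1 - \<epsilon>) * (hi - lo) \<and>
            (\<forall>i. lo' \<le> (\<Sum>j\<in>UNIV. a i j * f j) \<and> (\<Sum>j\<in>UNIV. a i j * f j) \<le> hi')"
proof -
  have a0: "0 \<le> a i j" for i j using a(1) \<open>0 \<le> \<epsilon>\<close> order_trans by blast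
  have "Min (range f) \<in> range f" "Max (range f) \<in> range f" by (rule Min_in Max_in, simp_all)+
  then obtain j0 j1 where "f j0 = Min (range f)" "f j1 = Max (range f)" by (metis rangeE)
  then have j0: "f j0 \<le> f j" and j1: "f j \<le> f j1" for j by simp_all
  have up: "(\<Sum>j\<in>UNIV. a i j * f j) \<le> hi - \<epsilon> * (hi - f j0)" for i
  proof -
    have "a i j0 * (hi - f j0) \<le> (\<Sum>j\<in>UNIV. a i j * (hi - f j))"
      by (rule member_le_sum) (auto intro!: mult_nonneg_nonneg a0 simp: f)
    also have "\<dots> = hi - (\<Sum>j\<in>UNIV. a i j * f j)"
      by (simp add: right_diff_distrib sum_subtractf sum_distrib_right[symmetric] a(2))
    finally show ?thesis using mult_right_mono[OF a(1)[of i j0], of "hi - f j0"] f(2)[of j0] by linarith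
  qed
  have down: "lo + \<epsilon> * (f j1 - lo) \<le> (\<Sum>j\<in>UNIV. a i j * f j)" for i
  proof -
    have "a i j1 * (f j1 - lo) \<le> (\<Sum>j\<in>UNIV. a i j * (f j - lo))"
      by (rule member_le_sum) (auto intro!: mult_nonneg_nonneg a0 simp: f)
    also have "\<dots> = (\<Sum>j\<in>UNIV. a i j * f j) - lo"
      by (simp add: right_diff_distrib sum_subtractf sum_distrib_right[symmetric] a(2))
    finally show ?thesis using mult_right_mono[OF a(1)[of i j1], of "f j1 - lo"] f(1)[of j1] by linarith
  qed
  have "\<epsilon> * f j0 \<le> \<epsilon> * f j1" using j1[of j0] \<open>0 \<le> \<epsilon>\<close> by (simp add: mult_left_mono)
  then have "(hi - \<epsilon> * (hi - f j0)) - (lo + \<epsilon> * (f j1 - lo)) \<le> (1 - \<epsilon>) * (hi - lo)"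
    by (simp add: algebra_simps)
  then show ?thesis using up down by blast
qed

lemma power_div_le_geometric:
  fixes r :: real
  assumes "0 \<le> r" "r < 1" "0 < N"
  shows "\<exists>K \<sigma>. 0 < \<sigma> \<and> \<sigma> < 1 \<and> 0 \<le> K \<and> (\<forall>n. r ^ (n div N) \<le> K * \<sigma> ^ n)"
proof -
  define \<rho> where "\<rho> = max r (1/2)"
  have \<rho>: "0 < \<rho>" "\<rho> < 1" "r \<le> \<rho>" unfolding \<rho>_def using assms by auto
  define \<sigma> where "\<sigma> = root N \<rho>"
  have \<sigma>: "0 < \<sigma>" "\<sigma> < 1" "\<sigma> ^ N = \<rho>" unfolding \<sigma>_def using \<rho> \<open>0 < N\<close>
    by (auto simp: real_root_gt_zero)
  have "r ^ (n div N) \<le> (1 / \<rho>) * \<sigma> ^ n" for n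
  proof -
    have "\<sigma> ^ n = \<sigma> ^ (N * (n div N) + n mod N)" by simp
    also have "\<dots> = \<rho> ^ (n div N) * \<sigma> ^ (n mod N)" by (simp only: power_add power_mult \<sigma>(3))
    finally have "\<sigma> ^ n = \<rho> ^ (n div N) * \<sigma> ^ (n mod N)" .
    moreover have "\<rho> \<le> \<sigma> ^ (n mod N)"
      unfolding \<sigma>(3)[symmetric] using \<sigma> \<open>0 < N\<close> by (intro power_decreasing) auto
    ultimately have "\<rho> ^ (n div N) * \<rho> \<le> \<sigma> ^ n" using \<rho> by (simp add: mult_left_mono)
    moreover have "\<rho> * r ^ (n div N) \<le> \<rho> * \<rho> ^ (n div N)"
      using assms \<rho> by (intro mult_left_mono power_mono) auto
    ultimately have "\<rho> * r ^ (n div N) \<le> \<sigma> ^ n" by (simp add: mult.commute)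
    then show ?thesis using \<rho> by (simp add: field_simps)
  qed
  then show ?thesis using \<sigma> \<rho> by (intro exI[of _ "1 / \<rho>"] exI[of _ \<sigma>]) auto
qed

locale finite_markov_chain =
  fixes P :: "'e::finite \<Rightarrow> 'e \<Rightarrow> real"
  assumes stochastic: "stochastic_matrix P"
begin

lemma nonneg: "0 \<le> P i j" and row_sum: "(\<Sum>j\<in>UNIV. P i j) = 1"
  using stochastic unfolding stochastic_matrix_def by auto

lemma mpow_nonneg: "0 \<le> mpow P n i j"
  by (induction n arbitrary: j) (auto intro!: sum_nonneg mult_nonneg_nonneg nonneg)

lemma mpow_row_sum: "(\<Sum>j\<in>UNIV. mpow P n i j) = 1"
proof (induction n)
  case (Suc n)
  have "(\<Sum>j\<in>UNIV. mpow P (Suc n) i j) = (\<Sum>k\<in>UNIV. mpow P n i k * (\<Sum>j\<in>UNIV. P k j))"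
    by (simp add: sum_distrib_left) (rule sum.swap)
  then show ?case using Suc by (simp add: row_sum)
qed simp

lemma mpow_le_1: "mpow P n i j \<le> 1"
  using member_le_sum[of j UNIV "mpow P n i"] by (simp add: mpow_nonneg mpow_row_sum)

lemma mpow_mult_le_mpow_add: "mpow P a i k * mpow P b k j \<le> mpow P (a + b) i j"
  unfolding mpow_add by (rule member_le_sum) (auto intro: mult_nonneg_nonneg mpow_nonneg)

lemma norm_Pop_le: "(\<And>j. norm (f j z) \<le> B) \<Longrightarrow> norm (Pop P f i z) \<le> B"
  unfolding Pop_def by (rule norm_convex_sum_le) (simp_all add: nonneg row_sum)

lemma mpow_oscillation_decay:
  fixes f :: "'e \<Rightarrow> real"
  assumes N: "0 < N" and \<epsilon>: "\<And>i j. \<epsilon> \<le> mpow P N i j" "0 \<le> \<epsilon>"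
    and f: "\<And>j. lo \<le> f j" "\<And>j. f j \<le> hi"
  shows "\<exists>lo' hi'. hi' - lo' \<le> (1 - \<epsilon>) ^ (n div N) * (hi - lo) \<and>
           (\<forall>i. lo' \<le> (\<Sum>j\<in>UNIV. mpow P n i j * f j) \<and> (\<Sum>j\<in>UNIV. mpow P n i j * f j) \<le> hi')"
proof (induction n rule: less_induct)
  case (less n)
  show ?case
  proof (cases "n < N")
    case True
    have "lo \<le> (\<Sum>j\<in>UNIV. mpow P n i j * f j) \<and> (\<Sum>j\<in>UNIV. mpow P n i j * f j) \<le> hi" for i
      using convex_sum_bounds[where A = UNIV and w = "mpow P n i" and f = f and lo = lo and hi = hi]
      by (simp add: mpow_nonneg mpow_row_sum f)
    then show ?thesis using True by (intro exI[of _ lo] exI[of _ hi]) simp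
  next
    case False
    define n' where "n' = n - N"
    have n_eq: "n = N + n'" using False unfolding n'_def by simp
    then have n: "n = N + n'" "n div N = Suc (n' div N)" using N by simp_all
    obtain l u where lu: "u - l \<le> (1 - \<epsilon>) ^ (n' div N) * (hi - lo)"
      "\<And>i. l \<le> (\<Sum>j\<in>UNIV. mpow P n' i j * f j)" "\<And>i. (\<Sum>j\<in>UNIV. mpow P n' i j * f j) \<le> u"
      using less[of n'] N n by auto
    have shift: "(\<Sum>j\<in>UNIV. mpow P n i j * f j)
        = (\<Sum>k\<in>UNIV. mpow P N i k * (\<Sum>j\<in>UNIV. mpow P n' k j * f j))" for i
      unfolding n(1) by (simp add: mpow_add sum_distrib_right sum_distrib_left mult.assoc) (rule sum.swap)
    obtain l' u' where lu': "u' - l' \<le> (1 - \<epsilon>) * (u - l)"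
      "\<And>i. l' \<le> (\<Sum>j\<in>UNIV. mpow P n i j * f j)" "\<And>i. (\<Sum>j\<in>UNIV. mpow P n i j * f j) \<le> u'"
      using doeblin_contraction[where a = "mpow P N" and f = "\<lambda>k. \<Sum>j\<in>UNIV. mpow P n' k j * f j",
          OF \<epsilon>(1) mpow_row_sum \<epsilon>(2) lu(2,3)]
      unfolding shift by blast
    have "\<epsilon> \<le> 1" using \<epsilon>(1) mpow_le_1 order_trans by blast
    then have "(1 - \<epsilon>) * (u - l) \<le> (1 - \<epsilon>) * ((1 - \<epsilon>) ^ (n' div N) * (hi - lo))"
      using lu(1) by (intro mult_left_mono) auto
    then show ?thesis using lu' n(2) by (intro exI[of _ l'] exI[of _ u']) auto
  qed
qed

end

locale ergodic_markov_chain = finite_markov_chain +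
  fixes \<mu> :: "'e::finite \<Rightarrow> real"
  assumes irreducible: "irreducible_matrix P" and aperiodic: "aperiodic_matrix P"
    and invariant: "invariant_probability P \<mu>"
begin

lemma mpow_diag_eventually_pos: "\<exists>N. \<forall>n\<ge>N. 0 < mpow P n i i"
proof -
  let ?S = "{n. 1 \<le> n \<and> 0 < mpow P n i i}"
  have "a + b \<in> ?S" if "a \<in> ?S" "b \<in> ?S" for a b
  proof -
    have "0 < mpow P a i i * mpow P b i i" using that by simp
    also have "\<dots> \<le> mpow P (a + b) i i" by (rule mpow_mult_le_mpow_add)
    finally show ?thesis using that by simp
  qed
  moreover have "Gcd ?S = 1" using aperiodic unfolding aperiodic_matrix_def by blast
  ultimately obtain N where "\<forall>n\<ge>N. n \<in> ?S" using add_closed_Gcd_1_large_mem[of ?S] by blast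
  then show ?thesis by auto
qed

lemma mpow_pos: "\<exists>N>0. \<forall>i j. 0 < mpow P N i j"
proof -
  obtain N0 where N0: "\<And>i n. N0 i \<le> n \<Longrightarrow> 0 < mpow P n i i"
    using mpow_diag_eventually_pos by metis
  obtain r where r: "\<And>i j. 0 < mpow P (r i j) i j"
    using irreducible unfolding irreducible_matrix_def by metis
  define N where "N = Max (range N0) + Max (range (case_prod r)) + 1"
  have "0 < mpow P N i j" for i j
  proof -
    have "r i j \<le> Max (range (case_prod r))" "N0 i \<le> Max (range N0)"
      by (auto intro!: Max_ge image_eqI[of _ _ "(i, j)"])
    then have "N0 i \<le> N - r i j" "N = (N - r i j) + r i j" unfolding N_def by linarith+
    then have "0 < mpow P (N - r i j) i i * mpow P (r i j) i j" using N0 r by simp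
    also have "\<dots> \<le> mpow P N i j"
      using mpow_mult_le_mpow_add[of "N - r i j" i i "r i j" j] \<open>N = (N - r i j) + r i j\<close> by simp
    finally show ?thesis .
  qed
  moreover have "0 < N" unfolding N_def by simp
  ultimately show ?thesis by blast
qed

lemma invariant_nonneg: "0 \<le> \<mu> i" and invariant_sum: "(\<Sum>i\<in>UNIV. \<mu> i) = 1"
  and invariant_step: "(\<Sum>i\<in>UNIV. \<mu> i * P i j) = \<mu> j"
  using invariant unfolding invariant_probability_def by auto

lemma invariant_mpow: "(\<Sum>i\<in>UNIV. \<mu> i * mpow P n i j) = \<mu> j"
proof (induction n arbitrary: j)
  case 0 then show ?case by (simp add: if_distrib[of "\<lambda>x. _ * x"] cong: if_cong)
next
  case (Suc n)
  have "(\<Sum>i\<in>UNIV. \<mu> i * mpow P (Suc n) i j) = (\<Sum>k\<in>UNIV. (\<Sum>i\<in>UNIV. \<mu> i * mpow P n i k) * P k j)"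
    by (simp add: sum_distrib_left sum_distrib_right mult.assoc) (rule sum.swap)
  then show ?case by (simp add: Suc invariant_step)
qed

text \<open>Geometric ergodicity: the oscillation bound squeezes \<open>P\<^sup>n f\<close> onto its
  \<open>\<mu>\<close>-average, which stays \<open>0\<close> by invariance.\<close>
lemma centered_mpow_decay:
  "\<exists>K \<sigma>. 0 < \<sigma> \<and> \<sigma> < 1 \<and> 0 \<le> K \<and>
     (\<forall>f. (\<forall>j. \<bar>f j\<bar> \<le> 1) \<longrightarrow> (\<Sum>j\<in>UNIV. \<mu> j * f j) = 0 \<longrightarrow>
        (\<forall>n i. \<bar>\<Sum>j\<in>UNIV. mpow P n i j * f j\<bar> \<le> K * \<sigma> ^ n))"
proof -
  obtain N where N: "0 < N" "\<And>i j. 0 < mpow P N i j" using mpow_pos by blast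
  define \<epsilon> where "\<epsilon> = Min (range (case_prod (mpow P N)))"
  have "\<epsilon> \<in> range (case_prod (mpow P N))" unfolding \<epsilon>_def by (rule Min_in) auto
  then have "0 < \<epsilon>" using N by auto
  have \<epsilon>_le: "\<epsilon> \<le> mpow P N i j" for i j
    unfolding \<epsilon>_def by (auto intro!: Min_le image_eqI[of _ _ "(i, j)"])
  then have "\<epsilon> \<le> 1" using mpow_le_1 order_trans by blast
  obtain K \<sigma> where K\<sigma>: "0 < \<sigma>" "\<sigma> < 1" "0 \<le> K" "\<And>n. (1 - \<epsilon>) ^ (n div N) \<le> K * \<sigma> ^ n"
    using power_div_le_geometric[of "1 - \<epsilon>" N] \<open>0 < \<epsilon>\<close> \<open>\<epsilon> \<le> 1\<close> N(1) by auto
  have "\<bar>\<Sum>j\<in>UNIV. mpow P n i j * f j\<bar> \<le> (2 * K) * \<sigma> ^ n"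
    if f: "\<And>j. \<bar>f j\<bar> \<le> 1" and centered: "(\<Sum>j\<in>UNIV. \<mu> j * f j) = 0" for f n i
  proof -
    let ?Pf = "\<lambda>i. \<Sum>j\<in>UNIV. mpow P n i j * f j"
    obtain lo hi where lh: "hi - lo \<le> (1 - \<epsilon>) ^ (n div N) * (1 - (-1))"
      "\<And>i. lo \<le> ?Pf i" "\<And>i. ?Pf i \<le> hi"
      using mpow_oscillation_decay[OF N(1) \<epsilon>_le, where lo = "-1" and hi = 1 and f = f and n = n] \<open>0 < \<epsilon>\<close> f
      by (auto simp: abs_le_iff)
    have "(\<Sum>i\<in>UNIV. \<mu> i * ?Pf i) = (\<Sum>j\<in>UNIV. (\<Sum>i\<in>UNIV. \<mu> i * mpow P n i j) * f j)"
      by (simp add: sum_distrib_left sum_distrib_right mult.assoc) (rule sum.swap)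
    then have "(\<Sum>i\<in>UNIV. \<mu> i * ?Pf i) = 0" by (simp add: invariant_mpow centered)
    then have "lo \<le> 0" "0 \<le> hi"
      using convex_sum_bounds[where A = UNIV and w = \<mu> and f = ?Pf and lo = lo and hi = hi] lh
      by (auto simp: invariant_nonneg invariant_sum)
    then have "\<bar>?Pf i\<bar> \<le> hi - lo" using lh(2,3)[of i] by linarith
    also have "\<dots> \<le> 2 * (K * \<sigma> ^ n)" using lh(1) K\<sigma>(4)[of n] by simp
    finally show ?thesis by simp
  qed
  then show ?thesis using K\<sigma> by (intro exI[of _ "2 * K"] exI[of _ \<sigma>]) auto
qed

end

section \<open>The Poisson equation and the coefficients \<open>b\<^sup>(\<^sup>m\<^sup>)\<close>, \<open>a\<^sup>(\<^sup>m\<^sup>)\<close>\<close>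

lemma Vdirs_eq: "(Vdirs :: (real^'d::finite) set) = range (\<lambda>k. axis k 1) \<union> range (\<lambda>k. axis k (-1))"
  unfolding Vdirs_def by auto

lemma finite_Vdirs: "finite (Vdirs :: (real^'d::finite) set)"
  unfolding Vdirs_eq by simp

lemma norm_Vdirs: "u \<in> (Vdirs :: (real^'d::finite) set) \<Longrightarrow> norm u = 1"
proof -
  have "axis k (-1::real) = - axis k 1" for k :: 'd by (simp add: axis_def vec_eq_iff)
  then show "u \<in> Vdirs \<Longrightarrow> norm u = 1" unfolding Vdirs_eq by auto
qed

lemma outer_nth: "outer u w $ i $ j = u $ i * w $ j"
  unfolding outer_def by simp

lemma Pop_nth: "Pop P f i z $ a = (\<Sum>j\<in>UNIV. P i j * f j z $ a)"
  unfolding Pop_def by simp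

lemma norm_outer_le:
  fixes u w :: "real^'d::finite"
  assumes "norm u \<le> a" "norm w \<le> b"
  shows "norm (outer u w) \<le> real CARD('d) * (a * b)"
proof -
  have "norm (outer u w) \<le> (\<Sum>i\<in>UNIV. norm (outer u w $ i))"
    unfolding norm_vec_def by (rule L2_set_le_sum) simp
  also have "\<dots> \<le> (\<Sum>i\<in>(UNIV::'d set). a * b)"
  proof (rule sum_mono)
    fix i
    have "outer u w $ i = u $ i *\<^sub>R w" unfolding outer_def by (simp add: vec_eq_iff)
    then have "norm (outer u w $ i) = \<bar>u $ i\<bar> * norm w" by simp
    also have "\<dots> \<le> a * b"
      using assms component_le_norm_cart[of u i] by (intro mult_mono) auto
    finally show "norm (outer u w $ i) \<le> a * b" .
  qed
  finally show ?thesis by simp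
qed

locale transition_walk = finite_markov_chain P for P :: "'e::finite \<Rightarrow> 'e \<Rightarrow> real" +
  fixes p :: "'e \<Rightarrow> real^'d::finite \<Rightarrow> real^'d \<Rightarrow> real"
  assumes p_nonneg: "\<And>k y u. u \<in> Vdirs \<Longrightarrow> 0 \<le> p k y u"
    and p_sum: "\<And>k y. (\<Sum>u\<in>Vdirs. p k y u) = 1"
begin

lemma norm_gfun_le: "norm (gfun p k y) \<le> 1"
  unfolding gfun_def by (rule norm_convex_sum_le) (simp_all add: p_nonneg p_sum norm_Vdirs)

lemma norm_alphafun_le: "norm (alphafun p i y) \<le> real CARD('d)"
  unfolding alphafun_def
  by (rule norm_convex_sum_le) (simp_all add: p_nonneg p_sum norm_outer_le[of _ 1 _ 1, simplified] norm_Vdirs)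

end

locale centered_walk = ergodic_markov_chain P \<mu> + transition_walk P p
  for P :: "'e::finite \<Rightarrow> 'e \<Rightarrow> real" and \<mu> and p :: "'e \<Rightarrow> real^'d::finite \<Rightarrow> real^'d \<Rightarrow> real" +
  assumes centered: "\<And>y. (\<Sum>k\<in>UNIV. \<mu> k *\<^sub>R gfun p k y) = 0"
begin

definition mpow_gfun :: "nat \<Rightarrow> 'e \<Rightarrow> real^'d \<Rightarrow> real^'d" where
  "mpow_gfun n i y = (\<Sum>j\<in>UNIV. mpow P n i j *\<^sub>R gfun p j y)"

lemma mpow_gfun_decay:
  "\<exists>K \<sigma>. 0 < \<sigma> \<and> \<sigma> < 1 \<and> 0 \<le> K \<and> (\<forall>n i y. norm (mpow_gfun n i y) \<le> K * \<sigma> ^ n)"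
proof -
  obtain K \<sigma> where K\<sigma>: "0 < \<sigma>" "\<sigma> < 1" "0 \<le> K"
    and decay: "\<And>f n i. \<forall>j. \<bar>f j\<bar> \<le> 1 \<Longrightarrow> (\<Sum>j\<in>UNIV. \<mu> j * f j) = 0 \<Longrightarrow>
                   \<bar>\<Sum>j\<in>UNIV. mpow P n i j * f j\<bar> \<le> K * \<sigma> ^ n"
    using centered_mpow_decay by blast
  have "norm (mpow_gfun n i y) \<le> (real CARD('d) * K) * \<sigma> ^ n" for n i y
  proof -
    have "\<bar>mpow_gfun n i y $ c\<bar> \<le> K * \<sigma> ^ n" for c
    proof -
      have "\<bar>gfun p j y $ c\<bar> \<le> 1" for j
        using component_le_norm_cart norm_gfun_le order_trans by blast
      moreover have "(\<Sum>j\<in>UNIV. \<mu> j * gfun p j y $ c) = 0"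
        using arg_cong[OF centered[of y], of "\<lambda>x. x $ c"] by simp
      ultimately show ?thesis unfolding mpow_gfun_def using decay[of "\<lambda>j. gfun p j y $ c"] by simp
    qed
    then have "norm (mpow_gfun n i y) \<le> (\<Sum>c\<in>(UNIV::'d set). K * \<sigma> ^ n)"
      by (intro order_trans[OF norm_le_l1_cart] sum_mono)
    then show ?thesis by simp
  qed
  then show ?thesis using K\<sigma> by (intro exI[of _ "real CARD('d) * K"] exI[of _ \<sigma>]) auto
qed

lemma summable_norm_mpow_gfun: "summable (\<lambda>n. norm (mpow_gfun n i y))"
proof -
  obtain K \<sigma> where K\<sigma>: "0 < \<sigma>" "\<sigma> < 1" "0 \<le> K" "\<And>n i y. norm (mpow_gfun n i y) \<le> K * \<sigma> ^ n"
    using mpow_gfun_decay by blast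
  have "summable (\<lambda>n. K * \<sigma> ^ n)" using K\<sigma> by (intro summable_mult summable_geometric) simp
  then show ?thesis by (rule summable_comparison_test') (simp add: K\<sigma>(4))
qed

lemma summable_mpow_gfun: "summable (\<lambda>n. mpow_gfun n i y)"
  by (rule summable_norm_cancel[OF summable_norm_mpow_gfun])

lemma vfun_bounded: "\<exists>V. \<forall>i y. norm (vfun P p i y) \<le> V"
proof -
  obtain K \<sigma> where K\<sigma>: "0 < \<sigma>" "\<sigma> < 1" "0 \<le> K" "\<And>n i y. norm (mpow_gfun n i y) \<le> K * \<sigma> ^ n"
    using mpow_gfun_decay by blast
  have geom: "summable (\<lambda>n. K * \<sigma> ^ n)" using K\<sigma> by (intro summable_mult summable_geometric) simp
  have "norm (vfun P p i y) \<le> (\<Sum>n. K * \<sigma> ^ n)" for i y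
  proof -
    have "norm (vfun P p i y) \<le> (\<Sum>n. norm (mpow_gfun n i y))"
      unfolding vfun_def mpow_gfun_def[symmetric] by (rule summable_norm[OF summable_norm_mpow_gfun])
    also have "\<dots> \<le> (\<Sum>n. K * \<sigma> ^ n)"
      by (rule suminf_le[OF _ summable_norm_mpow_gfun geom]) (rule K\<sigma>(4))
    finally show ?thesis .
  qed
  then show ?thesis by blast
qed

lemma mpow_gfun_Suc: "mpow_gfun (Suc n) i y = (\<Sum>k\<in>UNIV. P i k *\<^sub>R mpow_gfun n k y)"
proof -
  have "mpow_gfun (Suc n) i y = (\<Sum>j\<in>UNIV. \<Sum>k\<in>UNIV. (P i k * mpow P n k j) *\<^sub>R gfun p j y)"
    unfolding mpow_gfun_def mpow_Suc_left by (simp add: scaleR_sum_left)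
  also have "\<dots> = (\<Sum>k\<in>UNIV. P i k *\<^sub>R mpow_gfun n k y)"
    unfolding mpow_gfun_def by (subst sum.swap) (simp add: scaleR_sum_right)
  finally show ?thesis .
qed

lemma poisson_equation: "vfun P p i y = gfun p i y + Pop P (vfun P p) i y"
proof -
  have v: "vfun P p i y = (\<Sum>n. mpow_gfun n i y)" for i unfolding vfun_def mpow_gfun_def ..
  have "mpow_gfun 0 i y = gfun p i y"
    unfolding mpow_gfun_def by (simp add: if_distrib[of "\<lambda>c. c *\<^sub>R _"] cong: if_cong)
  moreover have "(\<Sum>n. mpow_gfun (Suc n) i y) = vfun P p i y - mpow_gfun 0 i y"
    unfolding v by (rule suminf_split_head[OF summable_mpow_gfun])
  moreover have "(\<Sum>n. mpow_gfun (Suc n) i y) = Pop P (vfun P p) i y"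
  proof -
    have "(\<Sum>n. mpow_gfun (Suc n) i y) = (\<Sum>k\<in>UNIV. \<Sum>n. P i k *\<^sub>R mpow_gfun n k y)"
      unfolding mpow_gfun_Suc by (rule suminf_sum) (intro summable_scaleR_right summable_mpow_gfun)
    also have "\<dots> = Pop P (vfun P p) i y"
      unfolding Pop_def v by (simp add: suminf_scaleR_right[OF summable_mpow_gfun])
    finally show ?thesis .
  qed
  ultimately show ?thesis by (simp add: algebra_simps)
qed

end

locale poisson_walk = transition_walk P p
  for P :: "'e::finite \<Rightarrow> 'e \<Rightarrow> real" and p :: "'e \<Rightarrow> real^'d::finite \<Rightarrow> real^'d \<Rightarrow> real" +
  fixes V :: real
  assumes vfun_le: "\<And>i y. norm (vfun P p i y) \<le> V"
    and poisson: "\<And>i y. vfun P p i y = gfun p i y + Pop P (vfun P p) i y"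
begin

lemma norm_bfun_le: "norm (bfun P p m i y) \<le> 2 * V + 2"
proof -
  have vg: "norm (vfun P p i z - gfun p i z) \<le> V + 1" for z
    using norm_triangle_ineq4[of "vfun P p i z" "gfun p i z"] vfun_le[of i z] norm_gfun_le[of i z] by linarith
  have "norm (vfun P p i z - gfun p i z - (vfun P p i y - gfun p i y)) \<le> 2 * V + 2" for z
    using norm_triangle_ineq4[of "vfun P p i z - gfun p i z" "vfun P p i y - gfun p i y"] vg[of z] vg[of y]
    by linarith
  then show ?thesis
    unfolding bfun_def by (intro norm_convex_sum_le) (simp_all add: p_nonneg p_sum)
qed

lemma norm_afun_le:
  "norm (afun P p m i y) \<le> real CARD('d) * (1 + (3 * V + 2)\<^sup>2 + V\<^sup>2 + 2 * V)"
proof -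
  let ?d = "real CARD('d)" and ?z = "\<lambda>u. y + inverse (real m) *\<^sub>R u"
  let ?w = "vfun P p i y + bfun P p m i y"
  let ?A = "\<lambda>u. Pop P (\<lambda>j z. outer (vfun P p j z) (vfun P p j z)) i (?z u)"
  let ?B = "\<lambda>u. outer u (Pop P (vfun P p) i (?z u)) + outer (Pop P (vfun P p) i (?z u)) u"
  have w_le: "norm ?w \<le> 3 * V + 2"
    using norm_triangle_ineq[of "vfun P p i y" "bfun P p m i y"] vfun_le[of i y] norm_bfun_le[of m i y]
    by linarith
  have w: "norm (outer ?w ?w) \<le> ?d * ((3 * V + 2) * (3 * V + 2))" by (rule norm_outer_le[OF w_le w_le])
  have A: "norm (?A u) \<le> ?d * (V * V)" for u
    by (intro norm_Pop_le norm_outer_le vfun_le)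
  have B: "norm (?B u) \<le> ?d * (1 * V) + ?d * (V * 1)" if "u \<in> Vdirs" for u
    using that by (intro order_trans[OF norm_triangle_ineq] add_mono norm_outer_le norm_Pop_le vfun_le)
      (simp_all add: norm_Vdirs)
  have "norm (?A u + ?B u) \<le> ?d * (V * V) + (?d * (1 * V) + ?d * (V * 1))" if "u \<in> Vdirs" for u
    using A[of u] B[OF that] norm_triangle_ineq[of "?A u" "?B u"] by linarith
  then have S: "norm (\<Sum>u\<in>Vdirs. p i y u *\<^sub>R (?A u + ?B u)) \<le> ?d * (V * V) + (?d * (1 * V) + ?d * (V * 1))"
    by (intro norm_convex_sum_le) (simp_all add: p_nonneg p_sum)
  have afun_eq: "afun P p m i y = alphafun p i y - outer ?w ?w + (\<Sum>u\<in>Vdirs. p i y u *\<^sub>R (?A u + ?B u))"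
    unfolding afun_def by (simp add: add.assoc)
  have "norm (afun P p m i y)
      \<le> norm (alphafun p i y) + norm (outer ?w ?w) + norm (\<Sum>u\<in>Vdirs. p i y u *\<^sub>R (?A u + ?B u))"
    using norm_triangle_ineq[of "alphafun p i y - outer ?w ?w" "\<Sum>u\<in>Vdirs. p i y u *\<^sub>R (?A u + ?B u)"]
      norm_triangle_ineq4[of "alphafun p i y" "outer ?w ?w"]
    unfolding afun_eq by linarith
  also have "\<dots> \<le> ?d + ?d * ((3 * V + 2) * (3 * V + 2)) + (?d * (V * V) + (?d * (1 * V) + ?d * (V * 1)))"
    by (rule add_mono[OF add_mono[OF norm_alphafun_le w] S])
  also have "\<dots> = ?d * (1 + (3 * V + 2)\<^sup>2 + V\<^sup>2 + 2 * V)"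
    by (simp add: algebra_simps power2_eq_square)
  finally show ?thesis .
qed

lemma afun_bounded: "\<exists>C. \<forall>m i y. norm (afun P p m i y) \<le> C"
  using norm_afun_le by blast

text \<open>Given \<open>\<xi>\<^sub>n = i\<close>, \<open>S\<^sub>n/m = y\<close>, the increment \<open>Z\<^sub>n\<^sub>+\<^sub>1\<close> equals \<open>u + v(k, y + u/m)\<close> with probability
  \<open>P(i, k) p(i, y, u)\<close>; the Poisson equation in the form \<open>P v = v - g\<close> evaluates its mean.\<close>
lemma transition_mean:
  "(\<Sum>k\<in>UNIV. \<Sum>u\<in>Vdirs. P i k * p i y u * (u + vfun P p k (y + inverse (real m) *\<^sub>R u)) $ c)
     = (vfun P p i y + bfun P p m i y) $ c"
proof -
  let ?z = "\<lambda>u. y + inverse (real m) *\<^sub>R u"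
  let ?v = "\<lambda>k z. vfun P p k z $ c" and ?g = "\<lambda>k z. gfun p k z $ c"
  have Pv: "(\<Sum>k\<in>UNIV. P i k * ?v k z) = ?v i z - ?g i z" for z
    using arg_cong[OF poisson[of i z], of "\<lambda>x. x $ c"] by (simp add: Pop_nth)
  have "(\<Sum>k\<in>UNIV. P i k * p i y u * (u + vfun P p k (?z u)) $ c)
      = p i y u * (u $ c + (?v i (?z u) - ?g i (?z u)))" for u
  proof -
    have "(\<Sum>k\<in>UNIV. P i k * p i y u * (u + vfun P p k (?z u)) $ c)
        = p i y u * (u $ c * (\<Sum>k\<in>UNIV. P i k) + (\<Sum>k\<in>UNIV. P i k * ?v k (?z u)))"
      by (simp add: sum_distrib_left sum_distrib_right sum.distrib algebra_simps)
    then show ?thesis by (simp add: row_sum Pv)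
  qed
  then have "(\<Sum>k\<in>UNIV. \<Sum>u\<in>Vdirs. P i k * p i y u * (u + vfun P p k (?z u)) $ c)
      = ?g i y + (\<Sum>u\<in>Vdirs. p i y u * (?v i (?z u) - ?g i (?z u)))"
    by (subst sum.swap) (simp add: gfun_def distrib_left sum.distrib)
  also have "\<dots> = (vfun P p i y + bfun P p m i y) $ c"
    unfolding bfun_def
    by (simp add: right_diff_distrib sum_subtractf sum_distrib_right[symmetric] p_sum)
  finally show ?thesis .
qed

lemma transition_second_moment:
  "(\<Sum>k\<in>UNIV. \<Sum>u\<in>Vdirs. P i k * p i y u *
       ((u + vfun P p k (y + inverse (real m) *\<^sub>R u)) $ a * (u + vfun P p k (y + inverse (real m) *\<^sub>R u)) $ b))
     = (afun P p m i y + outer (vfun P p i y + bfun P p m i y) (vfun P p i y + bfun P p m i y)) $ a $ b"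
proof -
  let ?z = "\<lambda>u. y + inverse (real m) *\<^sub>R u"
  let ?v = "\<lambda>k u. vfun P p k (?z u)"
  have "(\<Sum>k\<in>UNIV. P i k * p i y u * ((u + ?v k u) $ a * (u + ?v k u) $ b))
      = p i y u * (u $ a * u $ b + u $ a * Pop P (vfun P p) i (?z u) $ b
          + Pop P (vfun P p) i (?z u) $ a * u $ b
          + Pop P (\<lambda>j z. outer (vfun P p j z) (vfun P p j z)) i (?z u) $ a $ b)" for u
  proof -
    have "(\<Sum>k\<in>UNIV. P i k * p i y u * ((u + ?v k u) $ a * (u + ?v k u) $ b))
        = p i y u * (u $ a * u $ b * (\<Sum>k\<in>UNIV. P i k) + u $ a * (\<Sum>k\<in>UNIV. P i k * ?v k u $ b)
            + (\<Sum>k\<in>UNIV. P i k * ?v k u $ a) * u $ b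
            + (\<Sum>k\<in>UNIV. P i k * (?v k u $ a * ?v k u $ b)))"
      by (simp add: sum_distrib_left sum_distrib_right sum.distrib algebra_simps)
    then show ?thesis by (simp add: row_sum Pop_nth Pop_def outer_nth)
  qed
  then show ?thesis
    unfolding afun_def alphafun_def
    by (subst sum.swap) (simp add: outer_nth sum_distrib_left sum.distrib algebra_simps)
qed

lemma transition_covariance:
  "(\<Sum>k\<in>UNIV. \<Sum>u\<in>Vdirs. P i k * p i y u *
      (((u + vfun P p k (y + inverse (real m) *\<^sub>R u)) $ a - (vfun P p i y + bfun P p m i y) $ a) *
       ((u + vfun P p k (y + inverse (real m) *\<^sub>R u)) $ b - (vfun P p i y + bfun P p m i y) $ b)))
     = afun P p m i y $ a $ b"
proof -
  let ?W = "\<lambda>k u. u + vfun P p k (y + inverse (real m) *\<^sub>R u)"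
  let ?c = "vfun P p i y + bfun P p m i y"
  let ?w = "\<lambda>k u. P i k * p i y u"
  have w1: "(\<Sum>k\<in>UNIV. \<Sum>u\<in>Vdirs. ?w k u) = 1"
    by (simp add: sum_distrib_right[symmetric] sum_distrib_left[symmetric] p_sum row_sum)
  have "(\<Sum>k\<in>UNIV. \<Sum>u\<in>Vdirs. ?w k u * ((?W k u $ a - ?c $ a) * (?W k u $ b - ?c $ b)))
      = (\<Sum>k\<in>UNIV. \<Sum>u\<in>Vdirs. ?w k u * (?W k u $ a * ?W k u $ b))
        - ?c $ a * (\<Sum>k\<in>UNIV. \<Sum>u\<in>Vdirs. ?w k u * ?W k u $ b)
        - ?c $ b * (\<Sum>k\<in>UNIV. \<Sum>u\<in>Vdirs. ?w k u * ?W k u $ a)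
        + ?c $ a * ?c $ b * (\<Sum>k\<in>UNIV. \<Sum>u\<in>Vdirs. ?w k u)"
    by (simp add: sum_distrib_left sum.distrib sum_subtractf algebra_simps)
  also have "\<dots> = afun P p m i y $ a $ b"
    using transition_second_moment[where i = i and y = y and m = m and a = a and b = b]
      transition_mean[where i = i and y = y and m = m and c = a]
      transition_mean[where i = i and y = y and m = m and c = b] w1
    by (simp add: outer_nth mult.assoc)
  finally show ?thesis by (simp add: mult.assoc)
qed

end

section \<open>Finitely valued and bounded random variables\<close>

definition finite_valued :: "'a measure \<Rightarrow> ('a \<Rightarrow> 'b) \<Rightarrow> 'b set \<Rightarrow> bool" where
  "finite_valued G X R \<longleftrightarrow> X \<in> measurable G (count_space UNIV) \<and> finite R \<and> (\<forall>\<omega>\<in>space G. X \<omega> \<in> R)"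

lemma finite_valued_const: "finite_valued G (\<lambda>\<omega>. c) {c}"
  unfolding finite_valued_def by auto

lemma finite_valued_pair:
  assumes X: "finite_valued G X R" and Y: "finite_valued G Y T"
  shows "finite_valued G (\<lambda>\<omega>. (X \<omega>, Y \<omega>)) (R \<times> T)"
proof -
  have XY: "X \<omega> \<in> R" "Y \<omega> \<in> T" if "\<omega> \<in> space G" for \<omega> using X Y that unfolding finite_valued_def by auto
  have fin: "finite R" "finite T" using X Y unfolding finite_valued_def by auto
  have "(\<lambda>\<omega>. (X \<omega>, Y \<omega>)) -` B \<inter> space G \<in> sets G" for B
  proof -
    have "(\<lambda>\<omega>. (X \<omega>, Y \<omega>)) -` B \<inter> space G =
       (\<Union>z\<in>B \<inter> (R \<times> T). (X -` {fst z} \<inter> space G) \<inter> (Y -` {snd z} \<inter> space G))"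
      using XY by auto
    moreover have "X -` {a} \<inter> space G \<in> sets G" "Y -` {b} \<inter> space G \<in> sets G" for a b
      using X Y unfolding finite_valued_def by (auto intro: measurable_sets)
    ultimately show ?thesis using fin by (auto intro: sets.finite_UN)
  qed
  then show ?thesis using fin XY unfolding finite_valued_def measurable_def by auto
qed

lemma finite_valued_comp: "finite_valued G X R \<Longrightarrow> finite_valued G (\<lambda>\<omega>. h (X \<omega>)) (h ` R)"
  unfolding finite_valued_def by (auto intro: measurable_compose[where f = X and N = "count_space UNIV"])

lemma finite_valued_measurable: "finite_valued G X R \<Longrightarrow> (\<lambda>\<omega>. h (X \<omega>)) \<in> borel_measurable G"
  unfolding finite_valued_def by (auto intro: measurable_compose[where f = X and N = "count_space UNIV"])

lemma finite_valued_subalgebra: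
  assumes "subalgebra G' G" "finite_valued G X R"
  shows "finite_valued G' X R"
  using assms unfolding finite_valued_def subalgebra_def by (auto intro: measurable_from_subalg[OF assms(1)])

lemma (in finite_measure) integral_indicator_finite_valued:
  fixes h :: "'b \<Rightarrow> real"
  assumes X: "finite_valued M X R" and B: "B \<in> sets M"
  shows "(\<integral>\<omega>. indicator B \<omega> * h (X \<omega>) \<partial>M) = (\<Sum>x\<in>R. h x * measure M (B \<inter> {\<omega>\<in>space M. X \<omega> = x}))"
proof -
  let ?B = "\<lambda>x. B \<inter> {\<omega>\<in>space M. X \<omega> = x}"
  have fin: "finite R" and XR: "\<And>\<omega>. \<omega> \<in> space M \<Longrightarrow> X \<omega> \<in> R"
    using X unfolding finite_valued_def by auto
  have sets: "?B x \<in> sets M" for x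
  proof -
    have "?B x = B \<inter> (X -` {x} \<inter> space M)" by auto
    then show ?thesis using B X unfolding finite_valued_def by (auto intro: measurable_sets)
  qed
  have "(\<integral>\<omega>. indicator B \<omega> * h (X \<omega>) \<partial>M) = (\<integral>\<omega>. (\<Sum>x\<in>R. h x * indicator (?B x) \<omega>) \<partial>M)"
  proof (rule Bochner_Integration.integral_cong[OF refl])
    fix \<omega> assume \<omega>: "\<omega> \<in> space M"
    have "(\<Sum>x\<in>R. h x * indicator (?B x) \<omega>) = (\<Sum>x\<in>R. if x = X \<omega> then h (X \<omega>) * indicator B \<omega> else 0)"
      by (rule sum.cong) (auto simp: indicator_def \<omega>)
    then show "indicator B \<omega> * h (X \<omega>) = (\<Sum>x\<in>R. h x * indicator (?B x) \<omega>)"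
      using XR[OF \<omega>] fin by (simp add: sum.delta)
  qed
  also have "\<dots> = (\<Sum>x\<in>R. (\<integral>\<omega>. h x * indicator (?B x) \<omega> \<partial>M))"
    using sets by (intro Bochner_Integration.integral_sum integrable_mult_right integrable_real_indicator)
      (auto simp: less_top[symmetric])
  also have "\<dots> = (\<Sum>x\<in>R. h x * measure M (?B x))"
    using sets by simp
  finally show ?thesis .
qed

definition bounded_rv :: "'a measure \<Rightarrow> ('a \<Rightarrow> real) \<Rightarrow> bool" where
  "bounded_rv M f \<longleftrightarrow> f \<in> borel_measurable M \<and> (\<exists>B. AE x in M. \<bar>f x\<bar> \<le> B)"

lemma bounded_rvI: "f \<in> borel_measurable M \<Longrightarrow> (\<And>x. x \<in> space M \<Longrightarrow> \<bar>f x\<bar> \<le> B) \<Longrightarrow> bounded_rv M f"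
  unfolding bounded_rv_def by (auto intro!: exI[of _ B])

lemma bounded_rv_const: "bounded_rv M (\<lambda>x. c)"
  by (rule bounded_rvI[of _ _ "\<bar>c\<bar>"]) auto

lemma bounded_rv_add:
  assumes "bounded_rv M f" "bounded_rv M g"
  shows "bounded_rv M (\<lambda>x. f x + g x)"
proof -
  obtain B1 B2 where "AE x in M. \<bar>f x\<bar> \<le> B1" "AE x in M. \<bar>g x\<bar> \<le> B2"
    using assms unfolding bounded_rv_def by blast
  then have "AE x in M. \<bar>f x + g x\<bar> \<le> B1 + B2" by eventually_elim auto
  then show ?thesis using assms unfolding bounded_rv_def by auto
qed

lemma bounded_rv_uminus: "bounded_rv M f \<Longrightarrow> bounded_rv M (\<lambda>x. - f x)"
  unfolding bounded_rv_def by auto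

lemma bounded_rv_diff: "bounded_rv M f \<Longrightarrow> bounded_rv M g \<Longrightarrow> bounded_rv M (\<lambda>x. f x - g x)"
  using bounded_rv_add[of M f "\<lambda>x. - g x"] bounded_rv_uminus[of M g] by simp

lemma bounded_rv_mult:
  assumes "bounded_rv M f" "bounded_rv M g"
  shows "bounded_rv M (\<lambda>x. f x * g x)"
proof -
  obtain B1 B2 where "AE x in M. \<bar>f x\<bar> \<le> B1" "AE x in M. \<bar>g x\<bar> \<le> B2"
    using assms unfolding bounded_rv_def by blast
  then have "AE x in M. \<bar>f x * g x\<bar> \<le> B1 * B2"
  proof eventually_elim
    case (elim x)
    then show ?case unfolding abs_mult by (intro mult_mono) auto
  qed
  then show ?thesis using assms unfolding bounded_rv_def by auto
qed

lemma bounded_rv_sum: "(\<And>i. i \<in> I \<Longrightarrow> bounded_rv M (f i)) \<Longrightarrow> bounded_rv M (\<lambda>x. \<Sum>i\<in>I. f i x)"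
  by (induction I rule: infinite_finite_induct) (auto intro: bounded_rv_add bounded_rv_const)

lemma bounded_rv_indicator: "A \<in> sets M \<Longrightarrow> bounded_rv M (indicator A)"
  by (rule bounded_rvI[OF borel_measurable_indicator, where B = 1]) (simp_all add: indicator_def)

lemma bounded_rv_indicator_mult: "A \<in> sets M \<Longrightarrow> bounded_rv M f \<Longrightarrow> bounded_rv M (\<lambda>x. indicator A x * f x)"
  by (rule bounded_rv_mult[OF bounded_rv_indicator])

lemma bounded_rv_AE_eq:
  assumes "bounded_rv M g" "f \<in> borel_measurable M" "AE x in M. f x = g x"
  shows "bounded_rv M f"
proof -
  obtain B where "AE x in M. \<bar>g x\<bar> \<le> B" using assms(1) unfolding bounded_rv_def by blast
  then have "AE x in M. \<bar>f x\<bar> \<le> B" using assms(3) by eventually_elim auto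
  then show ?thesis using assms(2) unfolding bounded_rv_def by blast
qed

lemma (in finite_measure) bounded_rv_integrable:
  assumes "bounded_rv M f"
  shows "integrable M f"
proof -
  obtain B where "AE x in M. \<bar>f x\<bar> \<le> B" using assms unfolding bounded_rv_def by blast
  then show ?thesis using assms unfolding bounded_rv_def by (intro integrable_const_bound[where B = B]) auto
qed

section \<open>The martingale \<open>M\<close> and its bracket\<close>

locale markov_random_walk = poisson_walk P p V
  for P :: "'e::finite \<Rightarrow> 'e \<Rightarrow> real" and p :: "'e \<Rightarrow> real^'d::finite \<Rightarrow> real^'d \<Rightarrow> real" and V +
  fixes m :: nat and M :: "'a measure" and \<xi> :: "nat \<Rightarrow> 'a \<Rightarrow> 'e" and J :: "nat \<Rightarrow> 'a \<Rightarrow> real^'d"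
  assumes mrw: "mrw P p m M \<xi> J"
begin

abbreviation "F \<equiv> filt M \<xi> J"
abbreviation "S \<equiv> Sproc J"

sublocale prob_space M
  using mrw unfolding mrw_def by blast

lemma measurable_xi: "\<xi> n \<in> measurable M (count_space UNIV)"
  and measurable_J: "J n \<in> borel_measurable M"
  and J_Vdirs: "\<omega> \<in> space M \<Longrightarrow> J n \<omega> \<in> Vdirs"
  and measure_next: "u \<in> Vdirs \<Longrightarrow> A \<in> sets (F n) \<Longrightarrow>
     measure M (A \<inter> {\<omega>\<in>space M. \<xi> (Suc n) \<omega> = k \<and> J (Suc n) \<omega> = u})
      = (\<integral>\<omega>. indicator A \<omega> * (P (\<xi> n \<omega>) k * p (\<xi> n \<omega>) (inverse (real m) *\<^sub>R S n \<omega>) u) \<partial>M)"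
  using mrw unfolding mrw_def by blast+

definition filt_gen :: "nat \<Rightarrow> 'a set set" where
  "filt_gen n = (\<Union>i\<in>{..n}. {\<xi> i -` B \<inter> space M | B. True} \<union> {J i -` B \<inter> space M | B. B \<in> sets borel})"

lemma filt_gen_Pow: "filt_gen n \<subseteq> Pow (space M)"
  unfolding filt_gen_def by auto

lemma sets_filt: "sets (F n) = sigma_sets (space M) (filt_gen n)"
  and space_filt: "space (F n) = space M"
  unfolding filt_def filt_gen_def[symmetric] by (simp_all add: filt_gen_Pow)

lemma filt_gen_sets: "filt_gen n \<subseteq> sets M"
  using measurable_sets[OF measurable_xi] measurable_sets[OF measurable_J]
  unfolding filt_gen_def by auto

lemma sets_filt_subset: "sets (F n) \<subseteq> sets M"
  unfolding sets_filt by (rule sets.sigma_sets_subset[OF filt_gen_sets])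

lemma subalgebra_filt: "subalgebra M (F n)"
  unfolding subalgebra_def using sets_filt_subset space_filt by auto

lemma filt_gen_mono: "k \<le> n \<Longrightarrow> filt_gen k \<subseteq> filt_gen n"
  unfolding filt_gen_def by (intro UN_mono) auto

lemma subalgebra_filt_mono: "k \<le> n \<Longrightarrow> subalgebra (F n) (F k)"
  unfolding subalgebra_def space_filt sets_filt using sigma_sets_mono'[OF filt_gen_mono] by auto

lemma measurable_filt: "f \<in> borel_measurable (F n) \<Longrightarrow> f \<in> borel_measurable M"
  by (rule measurable_from_subalg[OF subalgebra_filt])

lemma measurable_filt_mono: "k \<le> n \<Longrightarrow> f \<in> borel_measurable (F k) \<Longrightarrow> f \<in> borel_measurable (F n)"
  by (rule measurable_from_subalg[OF subalgebra_filt_mono])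

lemma sigma_finite_filt: "sigma_finite_subalgebra M (F n)"
  using finite_measure_axioms subalgebra_filt
  by (intro finite_measure_subalgebra_is_sigma_finite)
    (simp add: finite_measure_subalgebra_def finite_measure_subalgebra_axioms_def)

lemma finite_valued_xi:
  assumes "k \<le> n"
  shows "finite_valued (F n) (\<xi> k) UNIV"
proof -
  have "\<xi> k -` B \<inter> space M \<in> sets (F n)" for B
    unfolding sets_filt filt_gen_def using assms by (intro sigma_sets.Basic) blast
  then show ?thesis unfolding finite_valued_def measurable_def space_filt by auto
qed

lemma finite_valued_J: "k \<le> n \<Longrightarrow> finite_valued (F n) (J k) Vdirs"
proof -
  assume k: "k \<le> n"
  have "J k -` B \<inter> space M \<in> sets (F n)" for B
  proof -
    have "J k -` B \<inter> space M = J k -` (B \<inter> Vdirs) \<inter> space M" using J_Vdirs by auto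
    moreover have "B \<inter> Vdirs \<in> sets borel" by (simp add: finite_Vdirs finite_imp_closed)
    ultimately show ?thesis unfolding sets_filt filt_gen_def using k by (intro sigma_sets.Basic) blast
  qed
  then show ?thesis unfolding finite_valued_def measurable_def space_filt using J_Vdirs finite_Vdirs by auto
qed

lemma finite_valued_S: "\<exists>R. finite_valued (F n) (S n) R"
proof (induction n)
  case 0 show ?case unfolding Sproc_def by (auto intro: finite_valued_const)
next
  case (Suc n)
  then obtain R where "finite_valued (F (Suc n)) (S n) R"
    using finite_valued_subalgebra[OF subalgebra_filt_mono[of n "Suc n"]] by auto
  then have "finite_valued (F (Suc n)) (\<lambda>\<omega>. (S n \<omega>, J (Suc n) \<omega>)) (R \<times> Vdirs)"
    by (intro finite_valued_pair finite_valued_J) auto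
  from finite_valued_comp[OF this, of "\<lambda>(s, u). s + u"] show ?case
    unfolding Sproc_def by auto
qed

lemma finite_valued_state: "k \<le> n \<Longrightarrow> \<exists>R. finite_valued (F n) (\<lambda>\<omega>. (\<xi> k \<omega>, S k \<omega>)) R"
  using finite_valued_S[of k] finite_valued_subalgebra[OF subalgebra_filt_mono] finite_valued_xi
    finite_valued_pair by blast

lemma measurable_state_fun: "k \<le> n \<Longrightarrow> (\<lambda>\<omega>. h (\<xi> k \<omega>) (S k \<omega>)) \<in> borel_measurable (F n)"
  using finite_valued_state[of k n] finite_valued_measurable[where h = "case_prod h"] by fastforce

lemma measure_next_at_state:
  fixes i :: 'e and s :: "real^'d"
  assumes u: "u \<in> Vdirs" and A: "A \<in> sets (F n)"
  shows "measure M (A \<inter> {\<omega>\<in>space M. ((\<xi> n \<omega>, S n \<omega>), (\<xi> (Suc n) \<omega>, J (Suc n) \<omega>)) = ((i, s), (k, u))})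
     = measure M (A \<inter> {\<omega>\<in>space M. (\<xi> n \<omega>, S n \<omega>) = (i, s)}) * (P i k * p i (inverse (real m) *\<^sub>R s) u)"
proof -
  define A' where "A' = A \<inter> {\<omega>\<in>space M. (\<xi> n \<omega>, S n \<omega>) = (i, s)}"
  obtain R where "finite_valued (F n) (\<lambda>\<omega>. (\<xi> n \<omega>, S n \<omega>)) R" using finite_valued_state by blast
  then have "(\<lambda>\<omega>. (\<xi> n \<omega>, S n \<omega>)) -` {(i, s)} \<inter> space (F n) \<in> sets (F n)"
    unfolding finite_valued_def by (auto intro: measurable_sets)
  then have "{\<omega>\<in>space M. (\<xi> n \<omega>, S n \<omega>) = (i, s)} \<in> sets (F n)"
    unfolding space_filt by (simp add: vimage_def Int_def conj_commute)
  then have A': "A' \<in> sets (F n)" using A unfolding A'_def by auto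
  have "A \<inter> {\<omega>\<in>space M. ((\<xi> n \<omega>, S n \<omega>), (\<xi> (Suc n) \<omega>, J (Suc n) \<omega>)) = ((i, s), (k, u))}
      = A' \<inter> {\<omega>\<in>space M. \<xi> (Suc n) \<omega> = k \<and> J (Suc n) \<omega> = u}"
    unfolding A'_def by auto
  then have "measure M (A \<inter> {\<omega>\<in>space M. ((\<xi> n \<omega>, S n \<omega>), (\<xi> (Suc n) \<omega>, J (Suc n) \<omega>)) = ((i, s), (k, u))})
     = (\<integral>\<omega>. indicator A' \<omega> * (P (\<xi> n \<omega>) k * p (\<xi> n \<omega>) (inverse (real m) *\<^sub>R S n \<omega>) u) \<partial>M)"
    using measure_next[OF u A'] by simp
  also have "\<dots> = (\<integral>\<omega>. indicator A' \<omega> * (P i k * p i (inverse (real m) *\<^sub>R s) u) \<partial>M)"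
    by (rule Bochner_Integration.integral_cong[OF refl]) (auto simp: indicator_def A'_def)
  also have "\<dots> = measure M A' * (P i k * p i (inverse (real m) *\<^sub>R s) u)"
    using A' sets_filt_subset by (simp add: Int_absorb2 sets.sets_into_space subset_iff)
  finally show ?thesis unfolding A'_def .
qed

text \<open>Since \<open>(\<xi>\<^sub>n, S\<^sub>n)\<close> takes finitely many values, it suffices
  to split \<open>A\<close> along them.\<close>
lemma integral_next_step:
  fixes \<Phi> :: "'e \<Rightarrow> real^'d \<Rightarrow> 'e \<Rightarrow> real^'d \<Rightarrow> real"
  assumes A: "A \<in> sets (F n)"
  shows "(\<integral>\<omega>. indicator A \<omega> * \<Phi> (\<xi> n \<omega>) (S n \<omega>) (\<xi> (Suc n) \<omega>) (J (Suc n) \<omega>) \<partial>M)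
       = (\<integral>\<omega>. indicator A \<omega> * (\<Sum>k\<in>UNIV. \<Sum>u\<in>Vdirs. P (\<xi> n \<omega>) k * p (\<xi> n \<omega>) (inverse (real m) *\<^sub>R S n \<omega>) u
              * \<Phi> (\<xi> n \<omega>) (S n \<omega>) k u) \<partial>M)"
proof -
  let ?D = "\<lambda>\<omega>. (\<xi> n \<omega>, S n \<omega>)"
  let ?D' = "\<lambda>\<omega>. (?D \<omega>, (\<xi> (Suc n) \<omega>, J (Suc n) \<omega>))"
  let ?A = "\<lambda>z. A \<inter> {\<omega>\<in>space M. ?D \<omega> = z}"
  define G where "G = (\<lambda>(i, s). \<Sum>k\<in>UNIV. \<Sum>u\<in>Vdirs. P i k * p i (inverse (real m) *\<^sub>R s) u * \<Phi> i s k u)"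
  obtain R where R: "finite_valued (F n) ?D R" using finite_valued_state by blast
  have D': "finite_valued (F (Suc n)) ?D' (R \<times> (UNIV \<times> Vdirs))"
    using finite_valued_subalgebra[OF subalgebra_filt_mono R, of "Suc n"]
    by (intro finite_valued_pair finite_valued_xi finite_valued_J) auto
  have AM: "A \<in> sets M" using A sets_filt_subset by auto
  let ?\<Phi> = "\<lambda>((i, s), (k, u)). \<Phi> i s k u"
  have "(\<integral>\<omega>. indicator A \<omega> * \<Phi> (\<xi> n \<omega>) (S n \<omega>) (\<xi> (Suc n) \<omega>) (J (Suc n) \<omega>) \<partial>M)
      = (\<integral>\<omega>. indicator A \<omega> * ?\<Phi> (?D' \<omega>) \<partial>M)" by simp
  also have "\<dots> = (\<Sum>z\<in>R \<times> (UNIV \<times> Vdirs). ?\<Phi> z * measure M (A \<inter> {\<omega>\<in>space M. ?D' \<omega> = z}))"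
    by (rule integral_indicator_finite_valued[OF finite_valued_subalgebra[OF subalgebra_filt D'] AM])
  also have "\<dots> = (\<Sum>z\<in>R. \<Sum>y\<in>UNIV \<times> Vdirs. ?\<Phi> (z, y) * measure M (A \<inter> {\<omega>\<in>space M. ?D' \<omega> = (z, y)}))"
    by (rule sum.cartesian_product')
  also have "\<dots> = (\<Sum>z\<in>R. G z * measure M (?A z))"
  proof (rule sum.cong[OF refl])
    fix z :: "'e \<times> (real^'d)"
    obtain i s where z: "z = (i, s)" by (cases z)
    have "(\<Sum>y\<in>UNIV \<times> Vdirs. ?\<Phi> (z, y) * measure M (A \<inter> {\<omega>\<in>space M. ?D' \<omega> = (z, y)}))
        = (\<Sum>k\<in>UNIV. \<Sum>u\<in>Vdirs. \<Phi> i s k u * measure M (A \<inter> {\<omega>\<in>space M. ?D' \<omega> = ((i, s), (k, u))}))"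
      unfolding z by (subst sum.cartesian_product') simp
    also have "\<dots> = (\<Sum>k\<in>UNIV. \<Sum>u\<in>Vdirs. \<Phi> i s k u * (measure M (?A (i, s)) * (P i k * p i (inverse (real m) *\<^sub>R s) u)))"
      by (intro sum.cong refl) (simp only: measure_next_at_state[OF _ A])
    also have "\<dots> = G z * measure M (?A z)"
      unfolding G_def z by (simp add: sum_distrib_left sum_distrib_right mult_ac)
    finally show "(\<Sum>y\<in>UNIV \<times> Vdirs. ?\<Phi> (z, y) * measure M (A \<inter> {\<omega>\<in>space M. ?D' \<omega> = (z, y)}))
        = G z * measure M (?A z)" .
  qed
  also have "\<dots> = (\<integral>\<omega>. indicator A \<omega> * G (?D \<omega>) \<partial>M)"
    by (rule integral_indicator_finite_valued[OF finite_valued_subalgebra[OF subalgebra_filt R] AM, symmetric])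
  finally show ?thesis unfolding G_def by simp
qed

definition Z :: "nat \<Rightarrow> 'a \<Rightarrow> real^'d" where
  "Z n \<omega> = J n \<omega> + vfun P p (\<xi> n \<omega>) (inverse (real m) *\<^sub>R S n \<omega>)"

definition cond_mean :: "nat \<Rightarrow> 'd \<Rightarrow> 'a \<Rightarrow> real" where
  "cond_mean n c \<omega> = (vfun P p (\<xi> n \<omega>) (inverse (real m) *\<^sub>R S n \<omega>)
                      + bfun P p m (\<xi> n \<omega>) (inverse (real m) *\<^sub>R S n \<omega>)) $ c"

lemma Z_Suc: "Z (Suc n) \<omega> = J (Suc n) \<omega>
    + vfun P p (\<xi> (Suc n) \<omega>) (inverse (real m) *\<^sub>R S n \<omega> + inverse (real m) *\<^sub>R J (Suc n) \<omega>)"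
  unfolding Z_def Sproc_def by (simp add: scaleR_right_distrib)

lemma measurable_Z: "(\<lambda>\<omega>. Z n \<omega> $ c) \<in> borel_measurable (F n)"
proof -
  obtain R where "finite_valued (F n) (S n) R" using finite_valued_S by blast
  then have "finite_valued (F n) (\<lambda>\<omega>. (\<xi> n \<omega>, (S n \<omega>, J n \<omega>))) (UNIV \<times> (R \<times> Vdirs))"
    by (intro finite_valued_pair finite_valued_xi finite_valued_J) auto
  from finite_valued_measurable[OF this, of "\<lambda>(i, s, u). (u + vfun P p i (inverse (real m) *\<^sub>R s)) $ c"]
  show ?thesis unfolding Z_def by simp
qed

lemma bounded_rv_Z: "bounded_rv M (\<lambda>\<omega>. Z n \<omega> $ c)"
proof (rule bounded_rvI[OF measurable_filt[OF measurable_Z]])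
  fix \<omega> assume "\<omega> \<in> space M"
  then have "norm (Z n \<omega>) \<le> 1 + V"
    unfolding Z_def using norm_Vdirs[OF J_Vdirs] vfun_le by (intro order_trans[OF norm_triangle_ineq] add_mono) auto
  then show "\<bar>Z n \<omega> $ c\<bar> \<le> 1 + V" using component_le_norm_cart order_trans by blast
qed

lemma measurable_cond_mean: "cond_mean n c \<in> borel_measurable (F n)"
  unfolding cond_mean_def by (rule measurable_state_fun) simp

lemma bounded_rv_cond_mean: "bounded_rv M (cond_mean n c)"
proof (rule bounded_rvI[OF measurable_filt[OF measurable_cond_mean]])
  fix \<omega>
  let ?i = "\<xi> n \<omega>" and ?y = "inverse (real m) *\<^sub>R S n \<omega>"
  have "norm (vfun P p ?i ?y + bfun P p m ?i ?y) \<le> V + (2 * V + 2)"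
    using vfun_le norm_bfun_le by (intro order_trans[OF norm_triangle_ineq] add_mono)
  then show "\<bar>cond_mean n c \<omega>\<bar> \<le> V + (2 * V + 2)"
    unfolding cond_mean_def using component_le_norm_cart order_trans by blast
qed

lemma integral_indicator_Z:
  assumes A: "A \<in> sets (F n)"
  shows "(\<integral>\<omega>. indicator A \<omega> * Z (Suc n) \<omega> $ c \<partial>M) = (\<integral>\<omega>. indicator A \<omega> * cond_mean n c \<omega> \<partial>M)"
proof -
  let ?\<Phi> = "\<lambda>i s k u. (u + vfun P p k (inverse (real m) *\<^sub>R s + inverse (real m) *\<^sub>R u)) $ c"
  have "(\<integral>\<omega>. indicator A \<omega> * Z (Suc n) \<omega> $ c \<partial>M)
      = (\<integral>\<omega>. indicator A \<omega> * ?\<Phi> (\<xi> n \<omega>) (S n \<omega>) (\<xi> (Suc n) \<omega>) (J (Suc n) \<omega>) \<partial>M)"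
    unfolding Z_Suc ..
  also have "\<dots> = (\<integral>\<omega>. indicator A \<omega> * (\<Sum>k\<in>UNIV. \<Sum>u\<in>Vdirs.
      P (\<xi> n \<omega>) k * p (\<xi> n \<omega>) (inverse (real m) *\<^sub>R S n \<omega>) u * ?\<Phi> (\<xi> n \<omega>) (S n \<omega>) k u) \<partial>M)"
    by (rule integral_next_step[OF A])
  also have "\<dots> = (\<integral>\<omega>. indicator A \<omega> * cond_mean n c \<omega> \<partial>M)"
    unfolding cond_mean_def using transition_mean by simp
  finally show ?thesis .
qed

lemma cond_exp_Z: "AE \<omega> in M. real_cond_exp M (F n) (\<lambda>\<omega>. Z (Suc n) \<omega> $ c) \<omega> = cond_mean n c \<omega>"
proof -
  interpret sigma_finite_subalgebra M "F n" by (rule sigma_finite_filt)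
  show ?thesis
  proof (rule real_cond_exp_charact)
    fix A assume "A \<in> sets (F n)"
    then show "(\<integral>\<omega>\<in>A. Z (Suc n) \<omega> $ c \<partial>M) = (\<integral>\<omega>\<in>A. cond_mean n c \<omega> \<partial>M)"
      unfolding set_lebesgue_integral_def using integral_indicator_Z by simp
  qed (auto intro: bounded_rv_integrable bounded_rv_Z bounded_rv_cond_mean measurable_cond_mean)
qed

lemma integral_mult_Z:
  assumes f: "f \<in> borel_measurable (F n)" "bounded_rv M f"
  shows "(\<integral>\<omega>. f \<omega> * Z (Suc n) \<omega> $ c \<partial>M) = (\<integral>\<omega>. f \<omega> * cond_mean n c \<omega> \<partial>M)"
proof -
  interpret sigma_finite_subalgebra M "F n" by (rule sigma_finite_filt)
  have meas: "f \<in> borel_measurable M" "cond_mean n c \<in> borel_measurable M"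
    using f(1) measurable_cond_mean by (auto intro: measurable_filt)
  have "(\<integral>\<omega>. f \<omega> * Z (Suc n) \<omega> $ c \<partial>M)
      = (\<integral>\<omega>. f \<omega> * real_cond_exp M (F n) (\<lambda>\<omega>. Z (Suc n) \<omega> $ c) \<omega> \<partial>M)"
    using f bounded_rv_Z measurable_filt[OF measurable_Z]
    by (intro real_cond_exp_intg(2)[symmetric] bounded_rv_integrable bounded_rv_mult)
  also have "\<dots> = (\<integral>\<omega>. f \<omega> * cond_mean n c \<omega> \<partial>M)"
  proof (rule integral_cong_AE)
    show "AE \<omega> in M. f \<omega> * real_cond_exp M (F n) (\<lambda>\<omega>. Z (Suc n) \<omega> $ c) \<omega> = f \<omega> * cond_mean n c \<omega>"
      using cond_exp_Z[of n c] by eventually_elim simp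
  qed (use meas in measurable)
  finally show ?thesis .
qed

abbreviation "Y \<equiv> Yproc P p m M \<xi> J"
abbreviation "Mart \<equiv> Mproc P p m M \<xi> J"

lemma Y_Suc:
  "Y (Suc n) \<omega> $ c = Z (Suc n) \<omega> $ c - real_cond_exp M (F n) (\<lambda>\<omega>. Z (Suc n) \<omega> $ c) \<omega>"
  unfolding Yproc_def Z_def Let_def by simp

lemma Y_AE_eq: "AE \<omega> in M. Y (Suc n) \<omega> $ c = Z (Suc n) \<omega> $ c - cond_mean n c \<omega>"
  using cond_exp_Z[of n c] by eventually_elim (simp add: Y_Suc)

lemma measurable_Y: "(\<lambda>\<omega>. Y (Suc n) \<omega> $ c) \<in> borel_measurable (F (Suc n))"
  unfolding Y_Suc
  using measurable_Z measurable_filt_mono[OF _ borel_measurable_cond_exp, of n "Suc n"] by measurable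

lemma bounded_rv_Y: "bounded_rv M (\<lambda>\<omega>. Y (Suc n) \<omega> $ c)"
  using bounded_rv_diff[OF bounded_rv_Z bounded_rv_cond_mean] measurable_filt[OF measurable_Y] Y_AE_eq
  by (rule bounded_rv_AE_eq)

lemma integral_mult_Y:
  assumes f: "f \<in> borel_measurable (F n)" "bounded_rv M f"
  shows "(\<integral>\<omega>. f \<omega> * Y (Suc n) \<omega> $ c \<partial>M) = 0"
proof -
  have meas: "f \<in> borel_measurable M" "(\<lambda>\<omega>. Y (Suc n) \<omega> $ c) \<in> borel_measurable M"
    "(\<lambda>\<omega>. Z (Suc n) \<omega> $ c) \<in> borel_measurable M" "cond_mean n c \<in> borel_measurable M"
    using measurable_filt[OF f(1)] measurable_filt[OF measurable_Y] measurable_filt[OF measurable_Z]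
      measurable_filt[OF measurable_cond_mean] by auto
  have "(\<integral>\<omega>. f \<omega> * Y (Suc n) \<omega> $ c \<partial>M) = (\<integral>\<omega>. f \<omega> * Z (Suc n) \<omega> $ c - f \<omega> * cond_mean n c \<omega> \<partial>M)"
  proof (rule integral_cong_AE)
    show "AE \<omega> in M. f \<omega> * Y (Suc n) \<omega> $ c = f \<omega> * Z (Suc n) \<omega> $ c - f \<omega> * cond_mean n c \<omega>"
      using Y_AE_eq[of n c] by eventually_elim (simp add: right_diff_distrib)
  qed (use meas in measurable)
  also have "\<dots> = 0"
    using f bounded_rv_Z bounded_rv_cond_mean integral_mult_Z[OF f]
    by (simp add: bounded_rv_integrable bounded_rv_mult)
  finally show ?thesis .
qed

lemma Mart_Suc: "Mart (Suc n) \<omega> $ c = Mart n \<omega> $ c + Y (Suc n) \<omega> $ c"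
  unfolding Mproc_def by simp

lemma measurable_Mart: "(\<lambda>\<omega>. Mart n \<omega> $ c) \<in> borel_measurable (F n)"
proof (induction n)
  case 0 then show ?case by (simp add: Mproc_def)
next
  case (Suc n)
  then have "(\<lambda>\<omega>. Mart n \<omega> $ c) \<in> borel_measurable (F (Suc n))" by (rule measurable_filt_mono[rotated]) simp
  with measurable_Y show ?case unfolding Mart_Suc by measurable
qed

lemma bounded_rv_Mart: "bounded_rv M (\<lambda>\<omega>. Mart n \<omega> $ c)"
  by (induction n) (simp_all add: Mproc_def bounded_rv_const Mart_Suc bounded_rv_add bounded_rv_Y)

lemma real_martingale_Mart: "real_martingale M F (\<lambda>n \<omega>. Mart n \<omega> $ c)"
  unfolding real_martingale_def
proof (intro conjI allI)
  fix n
  interpret sigma_finite_subalgebra M "F n" by (rule sigma_finite_filt)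
  show "AE \<omega> in M. real_cond_exp M (F n) (\<lambda>\<omega>. Mart (Suc n) \<omega> $ c) \<omega> = Mart n \<omega> $ c"
  proof (rule real_cond_exp_charact)
    fix A assume A: "A \<in> sets (F n)"
    then have AM: "A \<in> sets M" using sets_filt_subset by auto
    have "(\<integral>\<omega>. indicator A \<omega> * Mart (Suc n) \<omega> $ c \<partial>M)
        = (\<integral>\<omega>. indicator A \<omega> * Mart n \<omega> $ c \<partial>M) + (\<integral>\<omega>. indicator A \<omega> * Y (Suc n) \<omega> $ c \<partial>M)"
      unfolding Mart_Suc distrib_left
      by (intro Bochner_Integration.integral_add bounded_rv_integrable bounded_rv_indicator_mult[OF AM]
          bounded_rv_Mart bounded_rv_Y)
    also have "\<dots> = (\<integral>\<omega>. indicator A \<omega> * Mart n \<omega> $ c \<partial>M)"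
      using integral_mult_Y[of "indicator A" n c] A bounded_rv_indicator[OF AM] by simp
    finally show "(\<integral>\<omega>\<in>A. Mart (Suc n) \<omega> $ c \<partial>M) = (\<integral>\<omega>\<in>A. Mart n \<omega> $ c \<partial>M)"
      unfolding set_lebesgue_integral_def by simp
  qed (auto intro: bounded_rv_integrable bounded_rv_Mart measurable_Mart)
qed (auto intro: bounded_rv_integrable bounded_rv_Mart measurable_Mart)

lemma sq_integrable_martingale_Mart: "sq_integrable_martingale M F Mart"
  unfolding sq_integrable_martingale_def vec_martingale_def
proof (intro conjI allI real_martingale_Mart)
  fix n
  have "bounded_rv M (\<lambda>\<omega>. \<Sum>i\<in>UNIV. Mart n \<omega> $ i * Mart n \<omega> $ i)"
    by (intro bounded_rv_sum bounded_rv_mult bounded_rv_Mart)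
  then show "integrable M (\<lambda>\<omega>. (norm (Mart n \<omega>))\<^sup>2)"
    unfolding power2_norm_eq_inner inner_vec_def by (simp add: bounded_rv_integrable)
qed

definition bracket :: "nat \<Rightarrow> 'a \<Rightarrow> real^'d^'d" where
  "bracket n \<omega> = (\<Sum>k\<in>{1..n}. afun P p m (\<xi> (k - 1) \<omega>) (inverse (real m) *\<^sub>R S (k - 1) \<omega>))"

abbreviation afun_at :: "nat \<Rightarrow> 'd \<Rightarrow> 'd \<Rightarrow> 'a \<Rightarrow> real" where
  "afun_at n a b \<omega> \<equiv> afun P p m (\<xi> n \<omega>) (inverse (real m) *\<^sub>R S n \<omega>) $ a $ b"

lemma bracket_Suc: "bracket (Suc n) \<omega> $ a $ b = bracket n \<omega> $ a $ b + afun_at n a b \<omega>"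
  unfolding bracket_def by simp

lemma bounded_rv_afun_at: "bounded_rv M (afun_at n a b)"
proof (rule bounded_rvI[OF measurable_filt[OF measurable_state_fun[OF order_refl]]])
  fix \<omega>
  let ?A = "afun P p m (\<xi> n \<omega>) (inverse (real m) *\<^sub>R S n \<omega>)"
  have "\<bar>?A $ a $ b\<bar> \<le> norm (?A $ a)" by (rule component_le_norm_cart)
  also have "\<dots> \<le> norm ?A" by (rule Finite_Cartesian_Product.norm_nth_le)
  also have "\<dots> \<le> real CARD('d) * (1 + (3 * V + 2)\<^sup>2 + V\<^sup>2 + 2 * V)" by (rule norm_afun_le)
  finally show "\<bar>afun_at n a b \<omega>\<bar> \<le> real CARD('d) * (1 + (3 * V + 2)\<^sup>2 + V\<^sup>2 + 2 * V)" .
qed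

lemma measurable_bracket: "n \<le> Suc k \<Longrightarrow> (\<lambda>\<omega>. bracket n \<omega> $ a $ b) \<in> borel_measurable (F k)"
  unfolding bracket_def by (simp, intro borel_measurable_sum measurable_state_fun) auto

lemma bounded_rv_bracket: "bounded_rv M (\<lambda>\<omega>. bracket n \<omega> $ a $ b)"
  unfolding bracket_def by (simp, intro bounded_rv_sum bounded_rv_afun_at)

lemma integral_indicator_Y_Y:
  assumes A: "A \<in> sets (F n)"
  shows "(\<integral>\<omega>. indicator A \<omega> * (Y (Suc n) \<omega> $ a * Y (Suc n) \<omega> $ b) \<partial>M)
       = (\<integral>\<omega>. indicator A \<omega> * afun_at n a b \<omega> \<partial>M)"
proof -
  have AM: "A \<in> sets M" using A sets_filt_subset by auto
  let ?\<Phi> = "\<lambda>i s k u. ((u + vfun P p k (inverse (real m) *\<^sub>R s + inverse (real m) *\<^sub>R u)) $ a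
                 - (vfun P p i (inverse (real m) *\<^sub>R s) + bfun P p m i (inverse (real m) *\<^sub>R s)) $ a) *
              ((u + vfun P p k (inverse (real m) *\<^sub>R s + inverse (real m) *\<^sub>R u)) $ b
                 - (vfun P p i (inverse (real m) *\<^sub>R s) + bfun P p m i (inverse (real m) *\<^sub>R s)) $ b)"
  have meas: "(\<lambda>\<omega>. Y (Suc n) \<omega> $ c) \<in> borel_measurable M" "(\<lambda>\<omega>. Z (Suc n) \<omega> $ c) \<in> borel_measurable M"
    "cond_mean n c \<in> borel_measurable M" for c
    using measurable_filt[OF measurable_Y] measurable_filt[OF measurable_Z]
      measurable_filt[OF measurable_cond_mean] by auto
  have "(\<integral>\<omega>. indicator A \<omega> * (Y (Suc n) \<omega> $ a * Y (Suc n) \<omega> $ b) \<partial>M)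
      = (\<integral>\<omega>. indicator A \<omega> * ((Z (Suc n) \<omega> $ a - cond_mean n a \<omega>) * (Z (Suc n) \<omega> $ b - cond_mean n b \<omega>)) \<partial>M)"
  proof (rule integral_cong_AE)
    show "AE \<omega> in M. indicator A \<omega> * (Y (Suc n) \<omega> $ a * Y (Suc n) \<omega> $ b) =
        indicator A \<omega> * ((Z (Suc n) \<omega> $ a - cond_mean n a \<omega>) * (Z (Suc n) \<omega> $ b - cond_mean n b \<omega>))"
      using Y_AE_eq[of n a] Y_AE_eq[of n b] by eventually_elim simp
  qed (use AM meas in measurable)
  also have "\<dots> = (\<integral>\<omega>. indicator A \<omega> * ?\<Phi> (\<xi> n \<omega>) (S n \<omega>) (\<xi> (Suc n) \<omega>) (J (Suc n) \<omega>) \<partial>M)"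
    unfolding Z_Suc cond_mean_def ..
  also have "\<dots> = (\<integral>\<omega>. indicator A \<omega> * (\<Sum>k\<in>UNIV. \<Sum>u\<in>Vdirs.
      P (\<xi> n \<omega>) k * p (\<xi> n \<omega>) (inverse (real m) *\<^sub>R S n \<omega>) u * ?\<Phi> (\<xi> n \<omega>) (S n \<omega>) k u) \<partial>M)"
    by (rule integral_next_step[OF A])
  also have "\<dots> = (\<integral>\<omega>. indicator A \<omega> * afun_at n a b \<omega> \<partial>M)"
    using transition_covariance by simp
  finally show ?thesis .
qed

text \<open>With \<open>Q\<^sub>n = M\<^sub>n\<^sup>a M\<^sub>n\<^sup>b - \<langle>M\<rangle>\<^sub>n\<^sup>a\<^sup>b\<close>, the increment \<open>Q\<^sub>n\<^sub>+\<^sub>1 - Q\<^sub>n\<close> is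
  \<open>M\<^sub>n\<^sup>a Y\<^sup>b + M\<^sub>n\<^sup>b Y\<^sup>a + (Y\<^sup>a Y\<^sup>b - a\<^sub>n\<^sup>a\<^sup>b)\<close>; each term has vanishing integral over
  events of \<open>F\<^sub>n\<close>.\<close>
lemma real_martingale_bracket:
  "real_martingale M F (\<lambda>n \<omega>. (outer (Mart n \<omega>) (Mart n \<omega>) - bracket n \<omega>) $ a $ b)"
proof -
  define Q where "Q n \<omega> = Mart n \<omega> $ a * Mart n \<omega> $ b - bracket n \<omega> $ a $ b" for n \<omega>
  have Q_eq: "(\<lambda>n \<omega>. (outer (Mart n \<omega>) (Mart n \<omega>) - bracket n \<omega>) $ a $ b) = Q"
    unfolding Q_def by (simp add: outer_nth)
  have measurable_Q: "Q n \<in> borel_measurable (F n)" for n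
    unfolding Q_def using measurable_Mart measurable_bracket[of n n] by measurable
  have bounded_Q: "bounded_rv M (Q n)" for n
    unfolding Q_def by (intro bounded_rv_diff bounded_rv_mult bounded_rv_Mart bounded_rv_bracket)
  have "AE \<omega> in M. real_cond_exp M (F n) (Q (Suc n)) \<omega> = Q n \<omega>" for n
  proof -
    interpret sigma_finite_subalgebra M "F n" by (rule sigma_finite_filt)
    show ?thesis
    proof (rule real_cond_exp_charact)
      fix A assume A: "A \<in> sets (F n)"
      then have AM: "A \<in> sets M" using sets_filt_subset by auto
      let ?i = "\<lambda>\<omega>. indicator A \<omega> :: real"
      let ?MY = "\<lambda>c d \<omega>. ?i \<omega> * Mart n \<omega> $ c * Y (Suc n) \<omega> $ d"
      have MY: "(\<integral>\<omega>. ?MY c d \<omega> \<partial>M) = 0" for c d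
        using integral_mult_Y[of "\<lambda>\<omega>. ?i \<omega> * Mart n \<omega> $ c" n d] A measurable_Mart
          bounded_rv_indicator_mult[OF AM bounded_rv_Mart]
        by (simp add: borel_measurable_indicator)
      have int: "integrable M (?MY c d)" "integrable M (\<lambda>\<omega>. ?i \<omega> * Q n \<omega>)"
        "integrable M (\<lambda>\<omega>. ?i \<omega> * (Y (Suc n) \<omega> $ a * Y (Suc n) \<omega> $ b))"
        "integrable M (\<lambda>\<omega>. ?i \<omega> * afun_at n a b \<omega>)" for c d
        by (intro bounded_rv_integrable bounded_rv_mult bounded_rv_indicator_mult[OF AM] bounded_rv_Mart
            bounded_rv_Y bounded_Q bounded_rv_afun_at)+
      have "(\<lambda>\<omega>. ?i \<omega> * Q (Suc n) \<omega>) = (\<lambda>\<omega>. ?i \<omega> * Q n \<omega> + ?MY a b \<omega> + ?MY b a \<omega>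
          + (?i \<omega> * (Y (Suc n) \<omega> $ a * Y (Suc n) \<omega> $ b) - ?i \<omega> * afun_at n a b \<omega>))"
        by (simp add: Q_def Mart_Suc bracket_Suc algebra_simps)
      then have "(\<integral>\<omega>. ?i \<omega> * Q (Suc n) \<omega> \<partial>M) = (\<integral>\<omega>. ?i \<omega> * Q n \<omega> \<partial>M)"
        using int MY integral_indicator_Y_Y[OF A] by simp
      then show "(\<integral>\<omega>\<in>A. Q (Suc n) \<omega> \<partial>M) = (\<integral>\<omega>\<in>A. Q n \<omega> \<partial>M)"
        unfolding set_lebesgue_integral_def by simp
    qed (auto intro: bounded_rv_integrable bounded_Q measurable_Q)
  qed
  then show ?thesis
    unfolding Q_eq real_martingale_def using measurable_Q bounded_Q by (auto intro: bounded_rv_integrable)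
qed

lemma is_bracket_Mart: "is_bracket M F Mart bracket"
  unfolding is_bracket_def
  using real_martingale_bracket by (simp add: bracket_def[of 0] measurable_bracket)

end

theorem proposition4p3:
  fixes P :: "'e::finite \<Rightarrow> 'e \<Rightarrow> real"
    and \<mu> :: "'e \<Rightarrow> real"
    and p :: "'e \<Rightarrow> real^'d::finite \<Rightarrow> real^'d \<Rightarrow> real"
  assumes stoch: "stochastic_matrix P"
    and irred: "irreducible_matrix P"
    and aper: "aperiodic_matrix P"
    and inv: "invariant_probability P \<mu>"
    and inv_unique: "\<And>\<nu>. invariant_probability P \<nu> \<Longrightarrow> \<nu> = \<mu>"
    and p_nonneg: "\<And>k y u. u \<in> Vdirs \<Longrightarrow> 0 \<le> p k y u"
    and p_sum: "\<And>k y. (\<Sum>u\<in>Vdirs. p k y u) = 1"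
    and p_C2: "\<And>k u. u \<in> Vdirs \<Longrightarrow>
       \<exists>(D1 :: real^'d \<Rightarrow> ((real^'d) \<Rightarrow>\<^sub>L real)) (D2 :: real^'d \<Rightarrow> ((real^'d) \<Rightarrow>\<^sub>L ((real^'d) \<Rightarrow>\<^sub>L real))).
          (\<forall>y. ((\<lambda>z. p k z u) has_derivative blinfun_apply (D1 y)) (at y))
        \<and> (\<forall>y. (D1 has_derivative blinfun_apply (D2 y)) (at y))
        \<and> continuous_on UNIV D2 \<and> bounded (range D1) \<and> bounded (range D2)"
    and centered: "\<And>y. (\<Sum>k\<in>UNIV. \<mu> k *\<^sub>R gfun p k y) = 0"
  shows "(\<forall>m (M :: 'a measure) \<xi> J. 1 \<le> m \<and> mrw P p m M \<xi> J \<longrightarrow>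
             sq_integrable_martingale M (filt M \<xi> J) (Mproc P p m M \<xi> J)
           \<and> is_bracket M (filt M \<xi> J) (Mproc P p m M \<xi> J)
               (\<lambda>n \<omega>. \<Sum>k\<in>{1..n}. afun P p m (\<xi> (k - 1) \<omega>)
                                     (inverse (real m) *\<^sub>R Sproc J (k - 1) \<omega>)))
       \<and> (\<exists>C. \<forall>m \<ge> 1. \<forall>i y. norm (afun P p m i y) \<le> C)"
proof -
  interpret centered_walk P \<mu> p
    using stoch irred aper inv p_nonneg p_sum centered by unfold_locales
  obtain V where V: "\<And>i y. norm (vfun P p i y) \<le> V" using vfun_bounded by blast
  interpret poisson_walk P p V
    using V poisson_equation by unfold_locales
  have "sq_integrable_martingale M (filt M \<xi> J) (Mproc P p m M \<xi> J)
      \<and> is_bracket M (filt M \<xi> J) (Mproc P p m M \<xi> J)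
          (\<lambda>n \<omega>. \<Sum>k\<in>{1..n}. afun P p m (\<xi> (k - 1) \<omega>) (inverse (real m) *\<^sub>R Sproc J (k - 1) \<omega>))"
    if "mrw P p m M \<xi> J" for m and M :: "'a measure" and \<xi> J
  proof -
    interpret markov_random_walk P p V m M \<xi> J
      using that by unfold_locales
    have "bracket = (\<lambda>n \<omega>. \<Sum>k\<in>{1..n}. afun P p m (\<xi> (k - 1) \<omega>) (inverse (real m) *\<^sub>R Sproc J (k - 1) \<omega>))"
      by (intro ext) (simp add: bracket_def)
    then show ?thesis using sq_integrable_martingale_Mart is_bracket_Mart by simp
  qed
  then show ?thesis using afun_bounded by blast
qed

end
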